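(* Let $\mathcal{M}$ be an ergodic (not necessarily reversible) Markov chain on a finite state space $\Omega$ with stationary distribution $\pi$, and let $\mathcal{M}'$ be a reversible ergodic Markov chain on $\Omega$ with the same stationary distribution. Let $f$ be an $(\mathcal{M},\mathcal{M}')$-flow. Then for every $\varepsilon>0$ and $x\in\Omega$, $$\tau_x(\widetilde{\mathcal{M}},\varepsilon)\ \le\ \frac{A(f)}{2}\left[\tau\Big(\mathcal{M}',\frac{1}{2e}\Big)+1\right]\ln\left(\frac{1}{\varepsilon^2\pi(x)}\right).$$
   Context: A (discrete-time) Markov chain on a finite state space $\Omega$ with transition matrix $P$ is ergodic if irreducible and aperiodic; it then has a unique stationary distribution $\pi>0$; reversible means $\pi(x)P(x,y)=\pi(y)P(y,x)$. Variation distance: $\|\theta_1-\theta_2\|=\frac12\sum_i|\theta_1(i)-\theta_2(i)|$. Discrete mixing time: $\tau_x(\mathcal{M},\varepsilon)=\min\{t>0 \text{ integer}: \|P^{t'}(x,\cdot)-\pi\|\le\varepsilon \ \forall t'\ge t\}$, $\tau(\mathcal{M},\varepsilon)=\max_x\tau_x(\mathcal{M},\varepsilon)$. Continuization $\widetilde{\mathcal{M}}$: with $Q=P-I$, time-$t$ transition matrix $\exp(Qt)$; $\tau_x(\widetilde{\mathcal{M}},\varepsilon)=\inf\{t>0: \|v_x\exp(Qt')-\pi\|\le\varepsilon \ \forall \text{ real } t'\ge t\}$ ($v_x$ the unit row vector at $x$). Flows: Let $\mathcal{M}$ have transition matrix $P$ and stationary distribution $\pi$, and $\mathcal{M}'$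 have transition matrix $P'$ and stationary distribution $\pi'$. Let $E^*(\mathcal{M})=\{(x,y): P(x,y)>0\}$ (pairs not necessarily distinct), similarly $E^*(\mathcal{M}')$. For $(x,y)\in E^*(\mathcal{M}')$, $\mathcal{P}_{x,y}$ is the set of paths $\gamma=(x=x_0,\dots,x_k=y)$ with each $(x_i,x_{i+1})\in E^*(\mathcal{M})$ and each $(z,w)\in E^*(\mathcal{M})$ appearing at most twice as a consecutive pair on $\gamma$; $|\gamma|=k$. $\mathcal{P}=\bigcup_{(x,y)\in E^*(\mathcal{M}')}\mathcal{P}_{x,y}$. An $(\mathcal{M},\mathcal{M}')$-flow is $f:\mathcal{P}\to[0,1]$ with $\sum_{\gamma\in\mathcal{P}_{x,y}}f(\gamma)=\pi'(x)P'(x,y)$ for all $(x,y)\in E^*(\mathcal{M}')$. With $r((z,w),\gamma)$ the number of times $(z,w)$ appears on $\gamma$, $A_{z,w}(f)=\frac{1}{\pi(z)P(z,w)}\sum_{\gamma:(z,w)\in\gamma}r((z,w),\gamma)|\gamma|f(\gamma)$ and $A(f)=\max_{(z,w)\in E^*(\mathcal{M})}A_{z,w}(f)$. *)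

theory Defs
  imports "HOL-Analysis.Analysis"
begin

text \<open>State space: a finite type 'a (Omega = UNIV). Transition matrices are functions
  'a => 'a => real.\<close>

definition stochastic :: "('a::finite \<Rightarrow> 'a \<Rightarrow> real) \<Rightarrow> bool" where
  "stochastic P \<longleftrightarrow> (\<forall>x y. 0 \<le> P x y) \<and> (\<forall>x. (\<Sum>y\<in>UNIV. P x y) = 1)"

fun mpow :: "('a::finite \<Rightarrow> 'a \<Rightarrow> real) \<Rightarrow> nat \<Rightarrow> 'a \<Rightarrow> 'a \<Rightarrow> real" where
  "mpow P 0 x y = (if x = y then 1 else 0)"
| "mpow P (Suc n) x y = (\<Sum>z\<in>UNIV. mpow P n x z * P z y)"

definition irreducible_chain :: "('a::finite \<Rightarrow> 'a \<Rightarrow> real) \<Rightarrow> bool" where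
  "irreducible_chain P \<longleftrightarrow> (\<forall>x y. \<exists>t. mpow P t x y > 0)"

definition aperiodic_chain :: "('a::finite \<Rightarrow> 'a \<Rightarrow> real) \<Rightarrow> bool" where
  "aperiodic_chain P \<longleftrightarrow> (\<forall>x. Gcd {t::nat. t \<ge> 1 \<and> mpow P t x x > 0} = 1)"

definition ergodic :: "('a::finite \<Rightarrow> 'a \<Rightarrow> real) \<Rightarrow> bool" where
  "ergodic P \<longleftrightarrow> stochastic P \<and> irreducible_chain P \<and> aperiodic_chain P"

definition stationary :: "('a::finite \<Rightarrow> 'a \<Rightarrow> real) \<Rightarrow> ('a \<Rightarrow> real) \<Rightarrow> bool" where
  "stationary P \<pi> \<longleftrightarrow> (\<forall>x. 0 \<le> \<pi> x) \<and> (\<Sum>x\<in>UNIV. \<pi> x) = 1 \<and>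
     (\<forall>y. (\<Sum>x\<in>UNIV. \<pi> x * P x y) = \<pi> y)"

definition reversible :: "('a::finite \<Rightarrow> 'a \<Rightarrow> real) \<Rightarrow> ('a \<Rightarrow> real) \<Rightarrow> bool" where
  "reversible P \<pi> \<longleftrightarrow> (\<forall>x y. \<pi> x * P x y = \<pi> y * P y x)"

definition tvd :: "('a::finite \<Rightarrow> real) \<Rightarrow> ('a \<Rightarrow> real) \<Rightarrow> real" where
  "tvd \<mu> \<nu> = (1/2) * (\<Sum>i\<in>UNIV. \<bar>\<mu> i - \<nu> i\<bar>)"

definition mix_time_from :: "('a::finite \<Rightarrow> 'a \<Rightarrow> real) \<Rightarrow> ('a \<Rightarrow> real) \<Rightarrow> 'a \<Rightarrow> real \<Rightarrow> nat" where
  "mix_time_from P \<pi> x \<epsilon> =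
     (LEAST t. t > 0 \<and> (\<forall>t'\<ge>t. tvd (mpow P t' x) \<pi> \<le> \<epsilon>))"

definition mix_time :: "('a::finite \<Rightarrow> 'a \<Rightarrow> real) \<Rightarrow> ('a \<Rightarrow> real) \<Rightarrow> real \<Rightarrow> nat" where
  "mix_time P \<pi> \<epsilon> = Max (range (\<lambda>x. mix_time_from P \<pi> x \<epsilon>))"

text \<open>Continuization: exp(Qt) with Q = P - I, written out as
  exp(-t) * sum_k t^k/k! P^k (valid since P and I commute).\<close>
definition cont_kernel :: "('a::finite \<Rightarrow> 'a \<Rightarrow> real) \<Rightarrow> real \<Rightarrow> 'a \<Rightarrow> 'a \<Rightarrow> real" where
  "cont_kernel P t x y = (\<Sum>k. exp (- t) * t ^ k / fact k * mpow P k x y)"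

definition cont_mix_time_from :: "('a::finite \<Rightarrow> 'a \<Rightarrow> real) \<Rightarrow> ('a \<Rightarrow> real) \<Rightarrow> 'a \<Rightarrow> real \<Rightarrow> real" where
  "cont_mix_time_from P \<pi> x \<epsilon> =
     Inf {t::real. t > 0 \<and> (\<forall>t'\<ge>t. tvd (cont_kernel P t' x) \<pi> \<le> \<epsilon>)}"

text \<open>Flows. Paths are nonempty lists of states x0 ... xk; |gamma| = k.\<close>
definition edge_set :: "('a::finite \<Rightarrow> 'a \<Rightarrow> real) \<Rightarrow> ('a \<times> 'a) set" where
  "edge_set P = {(x, y). P x y > 0}"

definition path_edges :: "'a list \<Rightarrow> ('a \<times> 'a) list" where
  "path_edges \<gamma> = zip \<gamma> (tl \<gamma>)"

definition edge_mult :: "'a \<times> 'a \<Rightarrow> 'a list \<Rightarrow> nat" where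
  "edge_mult e \<gamma> = length (filter (\<lambda>e'. e' = e) (path_edges \<gamma>))"

definition path_len :: "'a list \<Rightarrow> nat" where
  "path_len \<gamma> = length \<gamma> - 1"

definition paths_between :: "('a::finite \<Rightarrow> 'a \<Rightarrow> real) \<Rightarrow> 'a \<Rightarrow> 'a \<Rightarrow> 'a list set" where
  "paths_between P x y = {\<gamma>. \<gamma> \<noteq> [] \<and> hd \<gamma> = x \<and> last \<gamma> = y \<and>
      (\<forall>e\<in>set (path_edges \<gamma>). e \<in> edge_set P) \<and>
      (\<forall>e. edge_mult e \<gamma> \<le> 2)}"

definition all_paths :: "('a::finite \<Rightarrow> 'a \<Rightarrow> real) \<Rightarrow> ('a \<Rightarrow> 'a \<Rightarrow> real) \<Rightarrow> 'a list set" where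
  "all_paths P P' = (\<Union>(x, y)\<in>edge_set P'. paths_between P x y)"

definition is_flow :: "('a::finite \<Rightarrow> 'a \<Rightarrow> real) \<Rightarrow> ('a \<Rightarrow> 'a \<Rightarrow> real) \<Rightarrow> ('a \<Rightarrow> real)
    \<Rightarrow> ('a list \<Rightarrow> real) \<Rightarrow> bool" where
  "is_flow P P' \<pi>' f \<longleftrightarrow>
     (\<forall>\<gamma>\<in>all_paths P P'. 0 \<le> f \<gamma> \<and> f \<gamma> \<le> 1) \<and>
     (\<forall>(x, y)\<in>edge_set P'. (\<Sum>\<gamma>\<in>paths_between P x y. f \<gamma>) = \<pi>' x * P' x y)"

definition flow_congestion_edge :: "('a::finite \<Rightarrow> 'a \<Rightarrow> real) \<Rightarrow> ('a \<Rightarrow> real) \<Rightarrow> ('a \<Rightarrow> 'a \<Rightarrow> real)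
    \<Rightarrow> ('a list \<Rightarrow> real) \<Rightarrow> 'a \<Rightarrow> 'a \<Rightarrow> real" where
  "flow_congestion_edge P \<pi> P' f z w =
     (1 / (\<pi> z * P z w)) *
     (\<Sum>\<gamma>\<in>{\<gamma>\<in>all_paths P P'. edge_mult (z, w) \<gamma> > 0}.
        real (edge_mult (z, w) \<gamma>) * real (path_len \<gamma>) * f \<gamma>)"

definition flow_congestion :: "('a::finite \<Rightarrow> 'a \<Rightarrow> real) \<Rightarrow> ('a \<Rightarrow> real) \<Rightarrow> ('a \<Rightarrow> 'a \<Rightarrow> real)
    \<Rightarrow> ('a list \<Rightarrow> real) \<Rightarrow> real" where
  "flow_congestion P \<pi> P' f =
     Max ((\<lambda>(z, w). flow_congestion_edge P \<pi> P' f z w) ` edge_set P)"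

end

theory Submission
  imports Defs
begin

text \<open>
  Let h_t = mu_t / pi - 1 be the relative density of the continuized chain started at x, and
  V(t) = Var_pi(h_t) its chi-square distance to pi. Then V' = -2 E_P(h_t), where E_P is the
  Dirichlet form of P. Routing every transition of P' along the flow f and applying
  Cauchy-Schwarz along each path gives E_P' <= A(f) E_P. For the reversible chain P' the
  mixing time tau controls the spectral gap: P'^tau contracts oscillations by the factor 1/e,
  and log-convexity of n |-> ||P'^n psi||^2 turns this into <psi, P' psi> <= exp(-1/tau) ||psi||^2
  for mean-zero psi, i.e. the Poincare inequality Var <= (tau + 1) E_P'. Hence
  V <= B E_P(h_t) = -B V'/2 with B = A(f)(tau + 1), so V(t) <= exp(-2t/B) V(0) <= exp(-2t/B) / pi(x),
  and the variation distance is at most sqrt(V)/2.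
\<close>

lemma sum_delta_mult [simp]:
  "(\<Sum>z\<in>UNIV. (if (x::'a::finite) = z then 1 else 0) * (f z::real)) = f x"
proof -
  have "(\<Sum>z\<in>UNIV. (if x = z then 1 else 0) * f z) = (\<Sum>z\<in>UNIV. if z = x then f z else 0)"
    by (rule sum.cong) auto
  then show ?thesis by simp
qed

lemma sum_mult_delta [simp]:
  "(\<Sum>z\<in>UNIV. (f z::real) * (if z = (y::'a::finite) then 1 else 0)) = f y"
proof -
  have "(\<Sum>z\<in>UNIV. f z * (if z = y then 1 else 0)) = (\<Sum>z\<in>UNIV. if z = y then f z else 0)"
    by (rule sum.cong) auto
  then show ?thesis by simp
qed

lemma ergodic_stochastic: "ergodic P \<Longrightarrow> stochastic P"
  by (simp add: ergodic_def)

lemma mpow_nonneg: "stochastic P \<Longrightarrow> 0 \<le> mpow P n x y"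
  by (induction n arbitrary: y) (auto simp: stochastic_def intro!: sum_nonneg)

lemma mpow_1: "mpow P (Suc 0) = P"
  by (simp add: fun_eq_iff)

lemma mpow_add: "mpow P (a + b) x y = (\<Sum>z\<in>UNIV. mpow P a x z * mpow P b z y)"
proof (induction b arbitrary: y)
  case 0
  then show ?case by simp
next
  case (Suc b)
  have "mpow P (a + Suc b) x y = (\<Sum>w\<in>UNIV. (\<Sum>z\<in>UNIV. mpow P a x z * mpow P b z w) * P w y)"
    by (simp add: Suc)
  also have "\<dots> = (\<Sum>w\<in>UNIV. \<Sum>z\<in>UNIV. mpow P a x z * (mpow P b z w * P w y))"
    by (simp add: sum_distrib_right mult.assoc)
  also have "\<dots> = (\<Sum>z\<in>UNIV. \<Sum>w\<in>UNIV. mpow P a x z * (mpow P b z w * P w y))"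
    by (rule sum.swap)
  also have "\<dots> = (\<Sum>z\<in>UNIV. mpow P a x z * mpow P (Suc b) z y)"
    by (simp add: sum_distrib_left)
  finally show ?case .
qed

lemma mpow_row_sum: "stochastic P \<Longrightarrow> (\<Sum>y\<in>UNIV. mpow P n x y) = 1"
proof (induction n)
  case 0
  then show ?case by simp
next
  case (Suc n)
  have "(\<Sum>y\<in>UNIV. mpow P (Suc n) x y) = (\<Sum>y\<in>UNIV. \<Sum>z\<in>UNIV. mpow P n x z * P z y)"
    by simp
  also have "\<dots> = (\<Sum>z\<in>UNIV. \<Sum>y\<in>UNIV. mpow P n x z * P z y)"
    by (rule sum.swap)
  also have "\<dots> = (\<Sum>z\<in>UNIV. mpow P n x z)"
    using Suc.prems by (simp add: sum_distrib_left[symmetric] stochastic_def)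
  finally show ?case using Suc by simp
qed

lemma mpow_le_1: "stochastic P \<Longrightarrow> mpow P n x y \<le> 1"
  using member_le_sum[of y UNIV "mpow P n x"] by (simp add: mpow_nonneg mpow_row_sum)

lemma mpow_mult_le_mpow_add:
  "stochastic P \<Longrightarrow> mpow P a x z * mpow P b z y \<le> mpow P (a + b) x y"
  unfolding mpow_add by (rule member_le_sum) (auto simp: mpow_nonneg)

lemma stationary_mpow:
  assumes "stationary P \<pi>"
  shows "stationary (mpow P n) \<pi>"
proof -
  have "(\<Sum>x\<in>UNIV. \<pi> x * mpow P n x y) = \<pi> y" for y
  proof (induction n arbitrary: y)
    case 0
    then show ?case by simp
  next
    case (Suc n)
    have "(\<Sum>x\<in>UNIV. \<pi> x * mpow P (Suc n) x y) = (\<Sum>x\<in>UNIV. \<Sum>z\<in>UNIV. \<pi> x * mpow P n x z * P z y)"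
      by (simp add: sum_distrib_left mult.assoc)
    also have "\<dots> = (\<Sum>z\<in>UNIV. \<Sum>x\<in>UNIV. \<pi> x * mpow P n x z * P z y)"
      by (rule sum.swap)
    also have "\<dots> = (\<Sum>z\<in>UNIV. \<pi> z * P z y)"
      using Suc by (simp add: sum_distrib_right[symmetric])
    finally show ?case using assms by (simp add: stationary_def)
  qed
  then show ?thesis using assms by (simp add: stationary_def)
qed

lemma stationary_pos:
  assumes "stochastic P" "irreducible_chain P" "stationary P \<pi>"
  shows "0 < \<pi> y"
proof -
  have nonneg: "\<And>x. 0 \<le> \<pi> x" using assms(3) by (simp add: stationary_def)
  have "\<exists>x. 0 < \<pi> x"
  proof (rule ccontr)
    assume "\<nexists>x. 0 < \<pi> x"
    then have "\<And>x. \<pi> x = 0" using nonneg by (meson not_less order_antisym)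
    then show False using assms(3) by (simp add: stationary_def)
  qed
  then obtain x where x: "0 < \<pi> x" ..
  obtain t where t: "0 < mpow P t x y" using assms(2) by (auto simp: irreducible_chain_def)
  have "\<pi> x * mpow P t x y \<le> (\<Sum>x\<in>UNIV. \<pi> x * mpow P t x y)"
    by (rule member_le_sum) (auto intro!: mult_nonneg_nonneg mpow_nonneg assms nonneg)
  also have "\<dots> = \<pi> y" using stationary_mpow[OF assms(3), of t] by (simp add: stationary_def)
  finally show ?thesis using mult_pos_pos[OF x t] by linarith
qed

lemma stationary_le_1: "stationary P \<pi> \<Longrightarrow> \<pi> x \<le> 1"
  using member_le_sum[of x UNIV \<pi>] by (simp add: stationary_def)

lemma ergodic_stationary_pos: "ergodic P \<Longrightarrow> stationary P \<pi> \<Longrightarrow> 0 < \<pi> y"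
  by (rule stationary_pos) (auto simp: ergodic_def)

definition kernel_op :: "('a::finite \<Rightarrow> 'a \<Rightarrow> real) \<Rightarrow> ('a \<Rightarrow> real) \<Rightarrow> 'a \<Rightarrow> real" where
  "kernel_op Q g = (\<lambda>x. \<Sum>y\<in>UNIV. Q x y * g y)"

lemma kernel_op_mpow_0: "kernel_op (mpow P 0) g = g"
  by (simp add: kernel_op_def fun_eq_iff)

lemma kernel_op_mpow_add:
  "kernel_op (mpow P (a + b)) g = kernel_op (mpow P a) (kernel_op (mpow P b) g)"
proof (rule ext)
  fix x
  have "kernel_op (mpow P (a + b)) g x = (\<Sum>y\<in>UNIV. \<Sum>z\<in>UNIV. mpow P a x z * mpow P b z y * g y)"
    by (simp add: kernel_op_def mpow_add sum_distrib_right)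
  also have "\<dots> = (\<Sum>z\<in>UNIV. \<Sum>y\<in>UNIV. mpow P a x z * mpow P b z y * g y)"
    by (rule sum.swap)
  also have "\<dots> = kernel_op (mpow P a) (kernel_op (mpow P b) g) x"
    by (simp add: kernel_op_def sum_distrib_left mult.assoc)
  finally show "kernel_op (mpow P (a + b)) g x = kernel_op (mpow P a) (kernel_op (mpow P b) g) x" .
qed

lemma kernel_op_mpow_Suc: "kernel_op (mpow P (Suc n)) g = kernel_op P (kernel_op (mpow P n) g)"
  using kernel_op_mpow_add[of P "Suc 0" n g] by (simp add: mpow_1)

definition osc :: "('a::finite \<Rightarrow> real) \<Rightarrow> real" where
  "osc g = Max (range g) - Min (range g)"

lemma abs_diff_le_osc: "\<bar>g x - g y\<bar> \<le> osc g"
proof -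
  have "g z \<le> Max (range g)" "Min (range g) \<le> g z" for z
    by (auto intro: Max_ge Min_le)
  then show ?thesis unfolding osc_def abs_le_iff by (smt (verit))
qed

lemma osc_nonneg: "0 \<le> osc g"
  using abs_diff_le_osc[of g undefined undefined] by simp

lemma osc_le:
  assumes "\<And>x y. g x - g y \<le> c"
  shows "osc g \<le> c"
proof -
  have "Max (range g) \<in> range g" "Min (range g) \<in> range g"
    by (auto intro: Max_in Min_in)
  then obtain a b where "Max (range g) = g a" "Min (range g) = g b"
    by blast
  then show ?thesis using assms[of a b] by (simp add: osc_def)
qed

lemma osc_indicator_le_1: "osc (\<lambda>w. if w = y then 1 else 0) \<le> 1"
  by (rule osc_le) auto

text \<open>Centering \<open>g\<close> at the midpoint of its range is possible because all rows of \<open>Q\<close> have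
  the same sum.\<close>

lemma osc_kernel_op_le:
  assumes rows: "\<And>x x'. (\<Sum>y\<in>UNIV. Q x y) = (\<Sum>y\<in>UNIV. Q x' y)"
    and dist: "\<And>x x'. (\<Sum>y\<in>UNIV. \<bar>Q x y - Q x' y\<bar>) \<le> 2 * \<theta>"
  shows "osc (kernel_op Q g) \<le> \<theta> * osc g"
proof (rule osc_le)
  fix x x'
  define c where "c = (Max (range g) + Min (range g)) / 2"
  have centered: "\<bar>g y - c\<bar> \<le> osc g / 2" for y
  proof -
    have "g y \<le> Max (range g)" "Min (range g) \<le> g y" by (auto intro: Max_ge Min_le)
    then show ?thesis unfolding c_def osc_def abs_le_iff by (simp add: field_simps)
  qed
  have "kernel_op Q g x - kernel_op Q g x'
      = (\<Sum>y\<in>UNIV. (Q x y - Q x' y) * (g y - c)) + c * ((\<Sum>y\<in>UNIV. Q x y) - (\<Sum>y\<in>UNIV. Q x' y))"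
    by (simp add: kernel_op_def left_diff_distrib right_diff_distrib sum_subtractf
        sum_distrib_left mult.commute)
  also have "\<dots> = (\<Sum>y\<in>UNIV. (Q x y - Q x' y) * (g y - c))"
    using rows[of x x'] by simp
  also have "\<dots> \<le> (\<Sum>y\<in>UNIV. \<bar>Q x y - Q x' y\<bar> * (osc g / 2))"
  proof (rule sum_mono)
    fix y
    have "(Q x y - Q x' y) * (g y - c) \<le> \<bar>Q x y - Q x' y\<bar> * \<bar>g y - c\<bar>"
      by (simp add: abs_mult[symmetric])
    also have "\<dots> \<le> \<bar>Q x y - Q x' y\<bar> * (osc g / 2)"
      using centered[of y] by (intro mult_left_mono) auto
    finally show "(Q x y - Q x' y) * (g y - c) \<le> \<bar>Q x y - Q x' y\<bar> * (osc g / 2)" .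
  qed
  also have "\<dots> = (\<Sum>y\<in>UNIV. \<bar>Q x y - Q x' y\<bar>) * (osc g / 2)"
    by (simp add: sum_distrib_right)
  also have "\<dots> \<le> 2 * \<theta> * (osc g / 2)"
    using dist[of x x'] osc_nonneg[of g] by (intro mult_right_mono) auto
  finally show "kernel_op Q g x - kernel_op Q g x' \<le> \<theta> * osc g" by simp
qed

lemma osc_kernel_op_mpow_le:
  assumes "stochastic P"
  shows "osc (kernel_op (mpow P n) g) \<le> osc g"
proof -
  have "osc (kernel_op (mpow P n) g) \<le> 1 * osc g"
  proof (rule osc_kernel_op_le)
    fix x x'
    show "(\<Sum>y\<in>UNIV. mpow P n x y) = (\<Sum>y\<in>UNIV. mpow P n x' y)"
      using assms by (simp add: mpow_row_sum)
    have "(\<Sum>y\<in>UNIV. \<bar>mpow P n x y - mpow P n x' y\<bar>) \<le> (\<Sum>y\<in>UNIV. mpow P n x y + mpow P n x' y)"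
      by (rule sum_mono) (use assms in \<open>simp add: abs_le_iff mpow_nonneg\<close>)
    also have "\<dots> = 2" using assms by (simp add: sum.distrib mpow_row_sum)
    finally show "(\<Sum>y\<in>UNIV. \<bar>mpow P n x y - mpow P n x' y\<bar>) \<le> 2 * 1" by simp
  qed
  then show ?thesis by simp
qed

lemma osc_kernel_op_doeblin:
  assumes nonneg: "\<And>x y. 0 \<le> Q x y" and rows: "\<And>x. (\<Sum>y\<in>UNIV. Q x y) = 1"
    and minorized: "\<And>x. \<delta> \<le> Q x y\<^sub>0"
  shows "osc (kernel_op Q g) \<le> (1 - \<delta>) * osc g"
proof (rule osc_kernel_op_le)
  fix x x'
  show "(\<Sum>y\<in>UNIV. Q x y) = (\<Sum>y\<in>UNIV. Q x' y)" by (simp add: rows)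
  have "(\<Sum>y\<in>UNIV. \<bar>Q x y - Q x' y\<bar>) = (\<Sum>y\<in>UNIV. Q x y + Q x' y - 2 * min (Q x y) (Q x' y))"
    by (rule sum.cong) (auto simp: min_def)
  also have "\<dots> = 2 - 2 * (\<Sum>y\<in>UNIV. min (Q x y) (Q x' y))"
    by (simp add: sum_subtractf sum.distrib rows sum_distrib_left)
  also have "\<dots> \<le> 2 - 2 * \<delta>"
  proof -
    have "min (Q x y\<^sub>0) (Q x' y\<^sub>0) \<le> (\<Sum>y\<in>UNIV. min (Q x y) (Q x' y))"
      by (rule member_le_sum) (auto simp: nonneg)
    then show ?thesis using minorized[of x] minorized[of x'] by linarith
  qed
  finally show "(\<Sum>y\<in>UNIV. \<bar>Q x y - Q x' y\<bar>) \<le> 2 * (1 - \<delta>)" by simp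
qed

lemma osc_kernel_op_mpow_iterate:
  assumes st: "stochastic P" and contr: "\<And>g. osc (kernel_op (mpow P r) g) \<le> \<theta> * osc g"
    and "0 \<le> \<theta>"
  shows "osc (kernel_op (mpow P (k * r + j)) g) \<le> \<theta> ^ k * osc g"
proof (induction k)
  case 0
  show ?case using osc_kernel_op_mpow_le[OF st] by simp
next
  case (Suc k)
  have "osc (kernel_op (mpow P (Suc k * r + j)) g)
      = osc (kernel_op (mpow P r) (kernel_op (mpow P (k * r + j)) g))"
    by (simp add: kernel_op_mpow_add[symmetric] add.assoc)
  also have "\<dots> \<le> \<theta> * osc (kernel_op (mpow P (k * r + j)) g)"
    by (rule contr)
  also have "\<dots> \<le> \<theta> * (\<theta> ^ k * osc g)"
    using Suc.IH \<open>0 \<le> \<theta>\<close> by (rule mult_left_mono)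
  finally show ?case by simp
qed

lemma mean_zero_abs_le_osc:
  assumes pos: "\<And>x. 0 < \<pi> x" and mean: "(\<Sum>x\<in>UNIV. \<pi> x * h x) = 0"
  shows "\<bar>h x\<bar> \<le> osc h"
proof -
  have "\<exists>y. h y \<le> 0"
  proof (rule ccontr)
    assume "\<nexists>y. h y \<le> 0"
    then have "0 < (\<Sum>x\<in>UNIV. \<pi> x * h x)" using pos by (intro sum_pos) (auto simp: not_le)
    then show False using mean by simp
  qed
  then obtain y where y: "h y \<le> 0" ..
  have "\<exists>z. 0 \<le> h z"
  proof (rule ccontr)
    assume "\<nexists>z. 0 \<le> h z"
    then have "0 < (\<Sum>x\<in>UNIV. - (\<pi> x * h x))"
      using pos by (intro sum_pos) (auto simp: not_le mult_pos_neg)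
    then show False using mean by (simp add: sum_negf)
  qed
  then obtain z where z: "0 \<le> h z" ..
  show ?thesis using abs_diff_le_osc[of h x y] abs_diff_le_osc[of h x z] y z by linarith
qed

lemma abs_mpow_minus_stationary_le_osc:
  assumes "stationary P \<pi>"
  shows "\<bar>mpow P t x y - \<pi> y\<bar> \<le> osc (\<lambda>x'. mpow P t x' y)"
proof -
  define h where "h = (\<lambda>x'. mpow P t x' y)"
  have nonneg: "\<And>z. 0 \<le> \<pi> z" and sum_1: "(\<Sum>z\<in>UNIV. \<pi> z) = 1"
    using assms by (auto simp: stationary_def)
  have "(\<Sum>z\<in>UNIV. \<pi> z * h z) = \<pi> y"
    using stationary_mpow[OF assms, of t] by (simp add: h_def stationary_def)
  then have "h x - \<pi> y = (\<Sum>z\<in>UNIV. \<pi> z * (h x - h z))"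
    using sum_1 by (simp add: right_diff_distrib sum_subtractf sum_distrib_right[symmetric])
  also have "\<bar>\<dots>\<bar> \<le> (\<Sum>z\<in>UNIV. \<pi> z * osc h)"
    by (rule order_trans[OF sum_abs sum_mono])
      (simp add: abs_mult nonneg abs_diff_le_osc mult_left_mono)
  also have "\<dots> = osc h" using sum_1 by (simp add: sum_distrib_right[symmetric])
  finally show ?thesis by (simp add: h_def)
qed

section \<open>Convergence of ergodic chains\<close>

lemma add_closed_mult_mem:
  fixes S :: "nat set"
  assumes add: "\<forall>a\<in>S. \<forall>b\<in>S. a + b \<in> S" and "a \<in> S" and "0 < k"
  shows "k * a \<in> S"
  using \<open>0 < k\<close>
proof (induction k rule: nat_induct_non_zero)
  case 1
  then show ?case using \<open>a \<in> S\<close> by simp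
next
  case (Suc k)
  then show ?case using add \<open>a \<in> S\<close> by simp
qed

text \<open>The least gap \<open>g\<close> between two elements of \<open>S\<close> divides every element of \<open>S\<close>: a nonzero
  remainder modulo \<open>g\<close> would produce a smaller gap. Hence \<open>g = Gcd S = 1\<close>.\<close>

lemma add_closed_Gcd_1_consecutive:
  fixes S :: "nat set"
  assumes add: "\<forall>a\<in>S. \<forall>b\<in>S. a + b \<in> S"
    and "0 \<notin> S" and "Gcd S = 1"
  shows "\<exists>a\<in>S. a + 1 \<in> S"
proof -
  define D where "D = {d. 0 < d \<and> (\<exists>a\<in>S. a + d \<in> S)}"
  obtain s where s: "s \<in> S" using \<open>Gcd S = 1\<close> by fastforce
  then have "s \<in> D" unfolding D_def using add \<open>0 \<notin> S\<close> by (auto intro: gr0I)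
  define g where "g = (LEAST d. d \<in> D)"
  have "g \<in> D" unfolding g_def by (rule LeastI) fact
  then obtain a where a: "a \<in> S" "a + g \<in> S" "0 < g" unfolding D_def by blast
  have "g = 1"
  proof (rule ccontr)
    assume "g \<noteq> 1"
    have "\<not> (\<forall>s\<in>S. g dvd s)"
    proof
      assume "\<forall>s\<in>S. g dvd s"
      then have "g dvd Gcd S" by (simp add: Gcd_greatest)
      then show False using \<open>Gcd S = 1\<close> \<open>g \<noteq> 1\<close> by simp
    qed
    then obtain s where s: "s \<in> S" "\<not> g dvd s" by blast
    define q where "q = s div g"
    define r where "r = s mod g"
    have s_eq: "s = q * g + r" unfolding q_def r_def by simp
    have r: "0 < r" "r < g" using s(2) a(3) unfolding r_def by (auto simp: dvd_eq_mod_eq_0)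
    have "(q + 1) * (a + g) \<in> S" by (rule add_closed_mult_mem[OF add a(2)]) simp
    moreover have "s + (q + 1) * a \<in> S"
      using add s(1) add_closed_mult_mem[OF add a(1), of "q + 1"] by simp
    moreover have "(s + (q + 1) * a) + (g - r) = (q + 1) * (a + g)"
      using s_eq r by (simp add: algebra_simps)
    ultimately have "g - r \<in> D"
      using r unfolding D_def by (auto intro!: bexI[of _ "s + (q + 1) * a"])
    then have "g \<le> g - r" unfolding g_def by (rule Least_le)
    then show False using r by simp
  qed
  then show ?thesis using a by blast
qed

lemma add_closed_Gcd_1_all_large:
  fixes S :: "nat set"
  assumes add: "\<forall>a\<in>S. \<forall>b\<in>S. a + b \<in> S"
    and "0 \<notin> S" and "Gcd S = 1"
  shows "\<exists>N. \<forall>n\<ge>N. n \<in> S"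
proof -
  obtain a where a: "a \<in> S" "a + 1 \<in> S" using add_closed_Gcd_1_consecutive[OF assms] by blast
  have "0 < a" using a(1) \<open>0 \<notin> S\<close> by (auto intro: gr0I)
  have "n \<in> S" if "a * a \<le> n" for n
  proof -
    define q where "q = n div a"
    define r where "r = n mod a"
    have n_eq: "n = q * a + r" unfolding q_def r_def by simp
    have "r < a" unfolding r_def using \<open>0 < a\<close> by simp
    have "a \<le> q"
    proof (rule ccontr)
      assume "\<not> a \<le> q"
      then have "(q + 1) * a \<le> a * a" by (intro mult_le_mono1) simp
      then show False using that n_eq \<open>r < a\<close> by (simp add: algebra_simps)
    qed
    have n_split: "n = (q - r) * a + r * (a + 1)"
      using n_eq \<open>a \<le> q\<close> \<open>r < a\<close> by (simp add: algebra_simps diff_mult_distrib)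
    have "r < q" using \<open>a \<le> q\<close> \<open>r < a\<close> by linarith
    then have "(q - r) * a \<in> S" by (intro add_closed_mult_mem[OF add a(1)]) simp
    show "n \<in> S"
    proof (cases "r = 0")
      case True
      then show ?thesis using \<open>(q - r) * a \<in> S\<close> n_split by simp
    next
      case False
      then have "r * (a + 1) \<in> S" by (intro add_closed_mult_mem[OF add a(2)]) simp
      then show ?thesis using add \<open>(q - r) * a \<in> S\<close> n_split by simp
    qed
  qed
  then show ?thesis by blast
qed

lemma aperiodic_mpow_diag_pos_eventually:
  assumes st: "stochastic P" and "aperiodic_chain P"
  shows "\<exists>N. \<forall>t\<ge>N. 0 < mpow P t x x"
proof -
  let ?S = "{t. 1 \<le> t \<and> 0 < mpow P t x x}"
  have "\<exists>N. \<forall>n\<ge>N. n \<in> ?S"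
  proof (rule add_closed_Gcd_1_all_large)
    show "\<forall>a\<in>?S. \<forall>b\<in>?S. a + b \<in> ?S"
      using mpow_mult_le_mpow_add[OF st, of _ x x _ x] by (auto intro: less_le_trans[OF mult_pos_pos])
  next
    show "Gcd ?S = 1" using \<open>aperiodic_chain P\<close> by (simp add: aperiodic_chain_def)
  qed simp
  then show ?thesis by blast
qed

lemma ergodic_mpow_pos:
  assumes "ergodic P"
  shows "\<exists>r\<ge>1. \<forall>x y. 0 < mpow P r x y"
proof -
  have st: "stochastic P" using assms by (rule ergodic_stochastic)
  have "\<exists>N. \<forall>t\<ge>N. 0 < mpow P t x x" for x
    using aperiodic_mpow_diag_pos_eventually[OF st] assms by (simp add: ergodic_def)
  then obtain N where N: "\<And>x t. N x \<le> t \<Longrightarrow> 0 < mpow P t x x" by metis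
  have "\<exists>t. 0 < mpow P t x y" for x y
    using assms by (simp add: ergodic_def irreducible_chain_def)
  then obtain T where T: "\<And>x y. 0 < mpow P (T x y) x y" by metis
  define r where "r = Max (range N) + Max (range (case_prod T)) + 1"
  have "0 < mpow P r x y" for x y
  proof -
    have "N x \<le> Max (range N)" and "T x y \<le> Max (range (case_prod T))"
      by (auto intro!: Max_ge image_eqI[of _ _ "(x, y)"])
    then have le: "N x \<le> r - T x y" and r_eq: "r = (r - T x y) + T x y"
      unfolding r_def by linarith+
    have "0 < mpow P (r - T x y) x x * mpow P (T x y) x y"
      using N[OF le] T[of x y] by simp
    also have "\<dots> \<le> mpow P r x y"
      using mpow_mult_le_mpow_add[OF st, of "r - T x y" x x "T x y" y] r_eq by simp
    finally show ?thesis .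
  qed
  moreover have "1 \<le> r" unfolding r_def by simp
  ultimately show ?thesis by blast
qed

lemma ergodic_osc_contraction:
  fixes P :: "'a::finite \<Rightarrow> 'a \<Rightarrow> real"
  assumes "ergodic P"
  shows "\<exists>r\<ge>1. \<exists>\<theta>\<ge>0. \<theta> < 1 \<and> (\<forall>g. osc (kernel_op (mpow P r) g) \<le> \<theta> * osc g)"
proof -
  have st: "stochastic P" using assms by (rule ergodic_stochastic)
  obtain r where r: "1 \<le> r" "\<And>x y. 0 < mpow P r x y" using ergodic_mpow_pos[OF assms] by blast
  fix y\<^sub>0 :: 'a
  define \<delta> where "\<delta> = Min (range (\<lambda>x. mpow P r x y\<^sub>0))"
  have \<delta>_le: "\<delta> \<le> mpow P r x y\<^sub>0" for x unfolding \<delta>_def by (rule Min_le) auto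
  have "\<delta> \<in> range (\<lambda>x. mpow P r x y\<^sub>0)" unfolding \<delta>_def by (rule Min_in) auto
  then have "0 < \<delta>" using r(2) by auto
  moreover have "\<delta> \<le> 1" using \<delta>_le[of y\<^sub>0] mpow_le_1[OF st, of r y\<^sub>0 y\<^sub>0] by simp
  ultimately show ?thesis
  proof (intro exI[of _ r] exI[of _ "1 - \<delta>"] conjI allI)
    show "osc (kernel_op (mpow P r) g) \<le> (1 - \<delta>) * osc g" for g
      by (rule osc_kernel_op_doeblin[of _ \<delta> y\<^sub>0]) (auto simp: st mpow_nonneg mpow_row_sum \<delta>_le)
  qed (use r(1) in auto)
qed

lemma ergodic_tvd_mpow_eventually_le:
  fixes P :: "'a::finite \<Rightarrow> 'a \<Rightarrow> real"
  assumes "ergodic P" and "stationary P \<pi>" and "0 < e"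
  shows "\<exists>t>0. \<forall>t'\<ge>t. \<forall>x. tvd (mpow P t' x) \<pi> \<le> e"
proof -
  have st: "stochastic P" using assms(1) by (rule ergodic_stochastic)
  obtain r \<theta> where r: "1 \<le> r" and \<theta>: "0 \<le> \<theta>" "\<theta> < 1"
    and contr: "\<And>g. osc (kernel_op (mpow P r) g) \<le> \<theta> * osc g"
    using ergodic_osc_contraction[OF assms(1)] by blast
  define n where "n = real CARD('a)"
  have "0 < n" unfolding n_def by simp
  obtain k where k: "\<theta> ^ k < 2 * e / n"
    using real_arch_pow_inv[of "2 * e / n" \<theta>] \<theta> \<open>0 < e\<close> \<open>0 < n\<close> by auto
  have "tvd (mpow P t x) \<pi> \<le> e" if "k * r \<le> t" for t x
  proof -
    have "k \<le> t div r" using that r by (metis div_le_mono div_mult_self_is_m not_one_le_zero zero_less_iff_neq_zero)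
    have entry: "\<bar>mpow P t x y - \<pi> y\<bar> \<le> \<theta> ^ k" for y
    proof -
      have "(\<lambda>x'. mpow P t x' y) = kernel_op (mpow P (t div r * r + t mod r)) (\<lambda>w. if w = y then 1 else 0)"
        by (simp add: kernel_op_def)
      then have "\<bar>mpow P t x y - \<pi> y\<bar> \<le> osc (kernel_op (mpow P (t div r * r + t mod r)) (\<lambda>w. if w = y then 1 else 0))"
        using abs_mpow_minus_stationary_le_osc[OF assms(2), of t x y] by simp
      also have "\<dots> \<le> \<theta> ^ (t div r) * osc (\<lambda>w. if w = y then 1 else 0)"
        by (rule osc_kernel_op_mpow_iterate[OF st contr \<theta>(1)])
      also have "\<dots> \<le> \<theta> ^ (t div r)"
        using osc_indicator_le_1[of y] \<theta>(1) by (simp add: mult_left_le)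
      also have "\<dots> \<le> \<theta> ^ k"
        using \<open>k \<le> t div r\<close> \<theta> by (simp add: power_decreasing)
      finally show ?thesis .
    qed
    have "(\<Sum>y\<in>UNIV. \<bar>mpow P t x y - \<pi> y\<bar>) \<le> (\<Sum>y\<in>(UNIV::'a set). \<theta> ^ k)"
      by (rule sum_mono) (rule entry)
    then have "tvd (mpow P t x) \<pi> \<le> 1 / 2 * n * \<theta> ^ k"
      by (simp add: tvd_def n_def)
    also have "\<dots> \<le> 1 / 2 * n * (2 * e / n)" using k \<open>0 < n\<close> by (intro mult_left_mono) auto
    also have "\<dots> = e" using \<open>0 < n\<close> by simp
    finally show ?thesis .
  qed
  then show ?thesis by (intro exI[of _ "k * r + 1"]) auto
qed

lemma mix_time_from_spec:
  assumes "ergodic P" and "stationary P \<pi>" and "0 < e"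
  shows "0 < mix_time_from P \<pi> x e \<and> (\<forall>t\<ge>mix_time_from P \<pi> x e. tvd (mpow P t x) \<pi> \<le> e)"
proof -
  obtain t where t: "0 < t" "\<And>t' x. t \<le> t' \<Longrightarrow> tvd (mpow P t' x) \<pi> \<le> e"
    using ergodic_tvd_mpow_eventually_le[OF assms] by blast
  show ?thesis unfolding mix_time_from_def by (rule LeastI[of _ t]) (use t in auto)
qed

lemma mix_time_from_le_mix_time: "mix_time_from P \<pi> x e \<le> mix_time P \<pi> e"
  unfolding mix_time_def by (rule Max_ge) auto

lemma mix_time_pos:
  assumes "ergodic P" and "stationary P \<pi>" and "0 < e"
  shows "0 < mix_time P \<pi> e"
  using mix_time_from_spec[OF assms, of undefined] mix_time_from_le_mix_time[of P \<pi> undefined e]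
  by linarith

lemma tvd_mpow_le_of_mix_time_le:
  assumes "ergodic P" and "stationary P \<pi>" and "0 < e" and "mix_time P \<pi> e \<le> t"
  shows "tvd (mpow P t x) \<pi> \<le> e"
proof -
  have "mix_time_from P \<pi> x e \<le> t" using mix_time_from_le_mix_time assms(4) by (rule order_trans)
  then show ?thesis using mix_time_from_spec[OF assms(1-3), of x] by blast
qed

section \<open>Poincare inequality from the mixing time\<close>

definition l2_inner :: "('a::finite \<Rightarrow> real) \<Rightarrow> ('a \<Rightarrow> real) \<Rightarrow> ('a \<Rightarrow> real) \<Rightarrow> real" where
  "l2_inner \<pi> f g = (\<Sum>x\<in>UNIV. \<pi> x * f x * g x)"

definition variance :: "('a::finite \<Rightarrow> real) \<Rightarrow> ('a \<Rightarrow> real) \<Rightarrow> real" where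
  "variance \<pi> \<phi> = l2_inner \<pi> \<phi> \<phi> - (\<Sum>x\<in>UNIV. \<pi> x * \<phi> x)\<^sup>2"

definition dirichlet_form :: "('a::finite \<Rightarrow> 'a \<Rightarrow> real) \<Rightarrow> ('a \<Rightarrow> real) \<Rightarrow> ('a \<Rightarrow> real) \<Rightarrow> real" where
  "dirichlet_form P \<pi> \<phi> = 1 / 2 * (\<Sum>x\<in>UNIV. \<Sum>y\<in>UNIV. \<pi> x * P x y * (\<phi> x - \<phi> y)\<^sup>2)"

abbreviation mix_time_inv_2e :: "('a::finite \<Rightarrow> 'a \<Rightarrow> real) \<Rightarrow> ('a \<Rightarrow> real) \<Rightarrow> nat" where
  "mix_time_inv_2e P \<pi> \<equiv> mix_time P \<pi> (1 / (2 * exp 1))"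

lemma l2_inner_self_nonneg: "(\<And>x. 0 \<le> \<pi> x) \<Longrightarrow> 0 \<le> l2_inner \<pi> f f"
  unfolding l2_inner_def by (intro sum_nonneg) (metis mult.assoc mult_nonneg_nonneg zero_le_square)

lemma l2_inner_Cauchy_Schwarz:
  assumes "\<And>x. 0 \<le> \<pi> x"
  shows "(l2_inner \<pi> f g)\<^sup>2 \<le> l2_inner \<pi> f f * l2_inner \<pi> g g"
proof -
  have "(\<Sum>x\<in>UNIV. (sqrt (\<pi> x) * f x) * (sqrt (\<pi> x) * g x))\<^sup>2
     \<le> (\<Sum>x\<in>UNIV. (sqrt (\<pi> x) * f x)\<^sup>2) * (\<Sum>x\<in>UNIV. (sqrt (\<pi> x) * g x)\<^sup>2)"
    by (rule Cauchy_Schwarz_ineq_sum)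
  moreover have "(sqrt (\<pi> x) * f x) * (sqrt (\<pi> x) * g x) = \<pi> x * f x * g x" for x
    using assms by (simp add: algebra_simps real_sqrt_mult_self)
  moreover have "(sqrt (\<pi> x) * h x)\<^sup>2 = \<pi> x * h x * h x" for x and h :: "'a \<Rightarrow> real"
    using assms by (simp add: power_mult_distrib power2_eq_square)
  ultimately show ?thesis unfolding l2_inner_def by simp
qed

lemma stationary_mean_kernel_op:
  assumes "stationary Q \<pi>"
  shows "(\<Sum>x\<in>UNIV. \<pi> x * kernel_op Q g x) = (\<Sum>x\<in>UNIV. \<pi> x * g x)"
proof -
  have "(\<Sum>x\<in>UNIV. \<pi> x * kernel_op Q g x) = (\<Sum>x\<in>UNIV. \<Sum>y\<in>UNIV. \<pi> x * Q x y * g y)"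
    unfolding kernel_op_def by (simp add: sum_distrib_left mult_ac)
  also have "\<dots> = (\<Sum>y\<in>UNIV. \<Sum>x\<in>UNIV. \<pi> x * Q x y * g y)"
    by (rule sum.swap)
  also have "\<dots> = (\<Sum>y\<in>UNIV. (\<Sum>x\<in>UNIV. \<pi> x * Q x y) * g y)"
    by (simp add: sum_distrib_right)
  also have "\<dots> = (\<Sum>y\<in>UNIV. \<pi> y * g y)"
    using assms by (simp add: stationary_def)
  finally show ?thesis .
qed

lemma reversible_kernel_op_self_adjoint:
  assumes "reversible P \<pi>"
  shows "l2_inner \<pi> f (kernel_op P g) = l2_inner \<pi> (kernel_op P f) g"
proof -
  have "l2_inner \<pi> f (kernel_op P g) = (\<Sum>x\<in>UNIV. \<Sum>y\<in>UNIV. (\<pi> x * P x y) * f x * g y)"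
    unfolding l2_inner_def kernel_op_def by (simp add: sum_distrib_left mult_ac)
  also have "\<dots> = (\<Sum>x\<in>UNIV. \<Sum>y\<in>UNIV. (\<pi> y * P y x) * f x * g y)"
    using assms by (simp add: reversible_def)
  also have "\<dots> = (\<Sum>y\<in>UNIV. \<Sum>x\<in>UNIV. (\<pi> y * P y x) * f x * g y)"
    by (rule sum.swap)
  also have "\<dots> = l2_inner \<pi> (kernel_op P f) g"
    unfolding l2_inner_def kernel_op_def by (simp add: sum_distrib_left sum_distrib_right mult_ac)
  finally show ?thesis .
qed

lemma dirichlet_form_diff_const: "dirichlet_form P \<pi> (\<lambda>x. \<phi> x - c) = dirichlet_form P \<pi> \<phi>"
  unfolding dirichlet_form_def by simp

lemma dirichlet_form_eq:
  assumes "stochastic P" and "stationary P \<pi>"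
  shows "dirichlet_form P \<pi> \<phi> = l2_inner \<pi> \<phi> \<phi> - l2_inner \<pi> \<phi> (kernel_op P \<phi>)"
proof -
  have rows: "\<And>x. (\<Sum>y\<in>UNIV. P x y) = 1" using assms(1) by (simp add: stochastic_def)
  have cols: "\<And>y. (\<Sum>x\<in>UNIV. \<pi> x * P x y) = \<pi> y" using assms(2) by (simp add: stationary_def)
  have "(\<Sum>x\<in>UNIV. \<Sum>y\<in>UNIV. \<pi> x * P x y * (\<phi> x - \<phi> y)\<^sup>2)
     = (\<Sum>x\<in>UNIV. \<Sum>y\<in>UNIV. \<pi> x * P x y * (\<phi> x)\<^sup>2)
       - 2 * (\<Sum>x\<in>UNIV. \<Sum>y\<in>UNIV. \<pi> x * P x y * \<phi> x * \<phi> y)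
       + (\<Sum>x\<in>UNIV. \<Sum>y\<in>UNIV. \<pi> x * P x y * (\<phi> y)\<^sup>2)"
    by (simp add: power2_diff algebra_simps sum.distrib sum_subtractf sum_distrib_left)
  also have "(\<Sum>x\<in>UNIV. \<Sum>y\<in>UNIV. \<pi> x * P x y * (\<phi> x)\<^sup>2) = l2_inner \<pi> \<phi> \<phi>"
    unfolding l2_inner_def
    by (simp add: sum_distrib_right[symmetric] rows power2_eq_square mult_ac
        flip: sum_distrib_left)
  also have "(\<Sum>x\<in>UNIV. \<Sum>y\<in>UNIV. \<pi> x * P x y * \<phi> x * \<phi> y) = l2_inner \<pi> \<phi> (kernel_op P \<phi>)"
    unfolding l2_inner_def kernel_op_def by (simp add: sum_distrib_left mult_ac)
  also have "(\<Sum>x\<in>UNIV. \<Sum>y\<in>UNIV. \<pi> x * P x y * (\<phi> y)\<^sup>2) = l2_inner \<pi> \<phi> \<phi>"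
  proof -
    have "(\<Sum>x\<in>UNIV. \<Sum>y\<in>UNIV. \<pi> x * P x y * (\<phi> y)\<^sup>2)
        = (\<Sum>y\<in>UNIV. \<Sum>x\<in>UNIV. \<pi> x * P x y * (\<phi> y)\<^sup>2)"
      by (rule sum.swap)
    also have "\<dots> = (\<Sum>y\<in>UNIV. (\<Sum>x\<in>UNIV. \<pi> x * P x y) * (\<phi> y)\<^sup>2)"
      by (simp add: sum_distrib_right)
    finally show ?thesis unfolding l2_inner_def by (simp add: cols power2_eq_square mult_ac)
  qed
  finally show ?thesis unfolding dirichlet_form_def by simp
qed

lemma variance_eq_l2_inner_centered:
  assumes "(\<Sum>x\<in>UNIV. \<pi> x) = 1"
  shows "variance \<pi> \<phi> = l2_inner \<pi> (\<lambda>x. \<phi> x - (\<Sum>y\<in>UNIV. \<pi> y * \<phi> y)) (\<lambda>x. \<phi> x - (\<Sum>y\<in>UNIV. \<pi> y * \<phi> y))"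
proof -
  define m where "m = (\<Sum>y\<in>UNIV. \<pi> y * \<phi> y)"
  have "l2_inner \<pi> (\<lambda>x. \<phi> x - m) (\<lambda>x. \<phi> x - m)
      = (\<Sum>x\<in>UNIV. \<pi> x * \<phi> x * \<phi> x - 2 * m * (\<pi> x * \<phi> x) + m\<^sup>2 * \<pi> x)"
    unfolding l2_inner_def by (intro sum.cong refl) (simp add: algebra_simps power2_eq_square)
  also have "\<dots> = l2_inner \<pi> \<phi> \<phi> - 2 * m * m + m\<^sup>2"
    unfolding l2_inner_def m_def
    by (simp add: sum.distrib sum_subtractf assms flip: sum_distrib_left)
  finally show ?thesis unfolding variance_def m_def by (simp add: power2_eq_square)
qed

lemma log_convex_seq_ratio_mono:
  fixes b :: "nat \<Rightarrow> real"
  assumes nonneg: "\<And>n. 0 \<le> b n" and log_convex: "\<And>n. (b (Suc n))\<^sup>2 \<le> b n * b (Suc (Suc n))"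
  shows "b 1 * b n \<le> b 0 * b (Suc n)"
proof (induction n)
  case 0
  then show ?case by (simp add: mult.commute)
next
  case (Suc n)
  show ?case
  proof (cases "b (Suc n) = 0")
    case True
    then show ?thesis using nonneg by simp
  next
    case False
    then have "0 < b (Suc n)" using nonneg[of "Suc n"] by simp
    have "b 1 * b (Suc n) * b (Suc n) \<le> b 1 * (b n * b (Suc (Suc n)))"
      using log_convex[of n] nonneg[of 1] by (simp add: mult_left_mono power2_eq_square mult.assoc)
    also have "\<dots> = (b 1 * b n) * b (Suc (Suc n))" by simp
    also have "\<dots> \<le> (b 0 * b (Suc n)) * b (Suc (Suc n))"
      using Suc.IH nonneg by (simp add: mult_right_mono)
    finally show ?thesis using \<open>0 < b (Suc n)\<close> by (simp add: mult_ac)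
  qed
qed

lemma log_convex_seq_pow_le:
  fixes b :: "nat \<Rightarrow> real"
  assumes nonneg: "\<And>n. 0 \<le> b n" and log_convex: "\<And>n. (b (Suc n))\<^sup>2 \<le> b n * b (Suc (Suc n))"
  shows "b 1 ^ n * b 0 \<le> b 0 ^ n * b n"
proof (induction n)
  case 0
  then show ?case by simp
next
  case (Suc n)
  have "b 1 ^ Suc n * b 0 = b 1 * (b 1 ^ n * b 0)" by simp
  also have "\<dots> \<le> b 1 * (b 0 ^ n * b n)" using Suc nonneg by (simp add: mult_left_mono)
  also have "\<dots> = b 0 ^ n * (b 1 * b n)" by simp
  also have "\<dots> \<le> b 0 ^ n * (b 0 * b (Suc n))"
    using log_convex_seq_ratio_mono[of b, OF nonneg log_convex, of n] nonneg by (simp add: mult_left_mono)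
  finally show ?case by (simp add: mult_ac)
qed

lemma log_convex_seq_1_le:
  fixes b :: "nat \<Rightarrow> real"
  assumes nonneg: "\<And>n. 0 \<le> b n" and log_convex: "\<And>n. (b (Suc n))\<^sup>2 \<le> b n * b (Suc (Suc n))"
    and "0 < m" and decay: "\<And>k. b (k * m) \<le> C * exp (- c) ^ k"
  shows "b 1 \<le> exp (- c / real m) * b 0"
proof (cases "b 0 = 0")
  case True
  then have "(b 1)\<^sup>2 \<le> 0" using log_convex[of 0] by simp
  then show ?thesis using True by simp
next
  case False
  then have "0 < b 0" using nonneg[of 0] by simp
  define s where "s = b 1 / b 0"
  have "s ^ m \<le> exp (- c)"
  proof (rule ccontr)
    assume "\<not> s ^ m \<le> exp (- c)"
    then have "1 < s ^ m / exp (- c)" by simp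
    then obtain k where k: "C / b 0 < (s ^ m / exp (- c)) ^ k" using real_arch_pow by blast
    have "s ^ (k * m) \<le> b (k * m) / b 0"
      using log_convex_seq_pow_le[of b, OF nonneg log_convex, of "k * m"] \<open>0 < b 0\<close>
      by (simp add: s_def power_divide field_simps)
    also have "\<dots> \<le> C * exp (- c) ^ k / b 0"
      using decay[of k] \<open>0 < b 0\<close> by (simp add: divide_right_mono)
    finally have "(s ^ m) ^ k \<le> C * exp (- c) ^ k / b 0"
      by (metis mult.commute power_mult)
    then have "(s ^ m / exp (- c)) ^ k \<le> C / b 0"
      by (simp add: power_divide field_simps)
    then show False using k by simp
  qed
  also have "exp (- c) = exp (- c / real m) ^ m"
    using \<open>0 < m\<close> by (simp add: exp_of_nat_mult[symmetric])
  finally have "s \<le> exp (- c / real m)"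
    using \<open>0 < m\<close> nonneg[of 1] \<open>0 < b 0\<close> by (subst (asm) power_mono_iff) (auto simp: s_def)
  then show ?thesis using \<open>0 < b 0\<close> by (simp add: s_def pos_divide_le_eq)
qed

lemma inverse_add_one_le_one_minus_exp:
  fixes x :: real
  assumes "0 < x"
  shows "1 / (x + 1) \<le> 1 - exp (- 1 / x)"
proof -
  have "1 + 1 / x \<le> exp (1 / x)" by (rule exp_ge_add_one_self)
  then have "exp (- 1 / x) \<le> x / (x + 1)" using assms by (simp add: exp_minus field_simps)
  then show ?thesis using assms by (simp add: field_simps)
qed

lemma osc_kernel_op_mix_time_le:
  assumes "ergodic P" and "stationary P \<pi>"
  shows "osc (kernel_op (mpow P (mix_time_inv_2e P \<pi>)) g) \<le> exp (- 1) * osc g"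
proof (rule osc_kernel_op_le)
  let ?Q = "mpow P (mix_time_inv_2e P \<pi>)"
  have st: "stochastic P" using assms(1) by (rule ergodic_stochastic)
  have mixed: "tvd (?Q x) \<pi> \<le> 1 / (2 * exp 1)" for x
    by (rule tvd_mpow_le_of_mix_time_le[OF assms]) simp_all
  fix x x'
  show "(\<Sum>y\<in>UNIV. ?Q x y) = (\<Sum>y\<in>UNIV. ?Q x' y)" by (simp add: mpow_row_sum st)
  have "(\<Sum>y\<in>UNIV. \<bar>?Q x y - ?Q x' y\<bar>) \<le> (\<Sum>y\<in>UNIV. \<bar>?Q x y - \<pi> y\<bar> + \<bar>?Q x' y - \<pi> y\<bar>)"
    by (rule sum_mono) linarith
  also have "\<dots> = 2 * tvd (?Q x) \<pi> + 2 * tvd (?Q x') \<pi>"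
    unfolding tvd_def by (simp add: sum.distrib)
  also have "\<dots> \<le> 2 * exp (- 1)"
    using mixed[of x] mixed[of x'] by (simp add: exp_minus field_simps)
  finally show "(\<Sum>y\<in>UNIV. \<bar>?Q x y - ?Q x' y\<bar>) \<le> 2 * exp (- 1)" .
qed

lemma l2_norm_kernel_op_mpow_mix_time_le:
  fixes k :: nat
  assumes erg: "ergodic P" and stat: "stationary P \<pi>" and mean: "(\<Sum>x\<in>UNIV. \<pi> x * \<psi> x) = 0"
  defines "\<psi>\<^sub>k \<equiv> kernel_op (mpow P (k * mix_time_inv_2e P \<pi>)) \<psi>"
  shows "l2_inner \<pi> \<psi>\<^sub>k \<psi>\<^sub>k \<le> (osc \<psi>)\<^sup>2 * exp (- 2) ^ k"
proof -
  have pos: "\<And>x. 0 < \<pi> x" using ergodic_stationary_pos[OF erg stat] .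
  have sum_1: "(\<Sum>x\<in>UNIV. \<pi> x) = 1" using stat by (simp add: stationary_def)
  have "(\<Sum>x\<in>UNIV. \<pi> x * \<psi>\<^sub>k x) = 0"
    unfolding \<psi>\<^sub>k_def using stationary_mean_kernel_op[OF stationary_mpow[OF stat]] mean by simp
  then have "\<bar>\<psi>\<^sub>k x\<bar> \<le> osc \<psi>\<^sub>k" for x by (rule mean_zero_abs_le_osc[OF pos])
  moreover have "osc \<psi>\<^sub>k \<le> exp (- 1) ^ k * osc \<psi>"
    unfolding \<psi>\<^sub>k_def
    using osc_kernel_op_mpow_iterate[OF ergodic_stochastic[OF erg] osc_kernel_op_mix_time_le[OF erg stat],
        of k 0 \<psi>]
    by simp
  ultimately have "(\<psi>\<^sub>k x)\<^sup>2 \<le> (exp (- 1) ^ k * osc \<psi>)\<^sup>2" for x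
    by (meson abs_le_square_iff order_trans abs_ge_self abs_of_nonneg osc_nonneg power_mono)
  then have "l2_inner \<pi> \<psi>\<^sub>k \<psi>\<^sub>k \<le> (\<Sum>x\<in>UNIV. \<pi> x * (exp (- 1) ^ k * osc \<psi>)\<^sup>2)"
    unfolding l2_inner_def using pos
    by (intro sum_mono) (simp add: mult.assoc mult_left_mono less_imp_le power2_eq_square[symmetric])
  also have "\<dots> = (osc \<psi>)\<^sup>2 * (exp (- 1) ^ k)\<^sup>2"
    using sum_1 by (simp add: power_mult_distrib mult.commute flip: sum_distrib_right)
  also have "(exp (- 1) ^ k)\<^sup>2 = exp (- 2 :: real) ^ k"
    by (simp add: power2_eq_square mult_exp_exp flip: power_mult_distrib)
  finally show ?thesis .
qed

text \<open>With \<open>b n = \<parallel>P\<^sup>n \<psi>\<parallel>\<^sup>2\<close>, self-adjointness gives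
  \<open>b (n+1) = \<langle>P\<^sup>n \<psi>, P\<^sup>n\<^sup>+\<^sup>2 \<psi>\<rangle>\<close>, so \<open>b\<close> is log-convex; its ratio \<open>b 1 / b 0\<close> is
  therefore at most the rate \<open>exp (-2/\<tau>)\<close> at which \<open>b\<close> decays along multiples of \<open>\<tau>\<close>.\<close>

lemma reversible_l2_inner_kernel_op_le:
  assumes erg: "ergodic P" and stat: "stationary P \<pi>" and rev: "reversible P \<pi>"
    and mean: "(\<Sum>x\<in>UNIV. \<pi> x * \<psi> x) = 0"
  shows "l2_inner \<pi> \<psi> (kernel_op P \<psi>) \<le> exp (- 1 / real (mix_time_inv_2e P \<pi>)) * l2_inner \<pi> \<psi> \<psi>"
proof -
  let ?\<tau> = "mix_time_inv_2e P \<pi>"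
  define b where "b n = l2_inner \<pi> (kernel_op (mpow P n) \<psi>) (kernel_op (mpow P n) \<psi>)" for n
  have nonneg: "\<And>x. 0 \<le> \<pi> x" using stat by (simp add: stationary_def)
  have b_nonneg: "0 \<le> b n" for n unfolding b_def by (rule l2_inner_self_nonneg[OF nonneg])
  have b_log_convex: "(b (Suc n))\<^sup>2 \<le> b n * b (Suc (Suc n))" for n
  proof -
    let ?\<psi>\<^sub>n = "kernel_op (mpow P n) \<psi>"
    have "b (Suc n) = l2_inner \<pi> (kernel_op P ?\<psi>\<^sub>n) (kernel_op P ?\<psi>\<^sub>n)"
      by (simp add: b_def kernel_op_mpow_Suc)
    also have "\<dots> = l2_inner \<pi> ?\<psi>\<^sub>n (kernel_op (mpow P (Suc (Suc n))) \<psi>)"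
      by (simp add: reversible_kernel_op_self_adjoint[OF rev] kernel_op_mpow_Suc)
    finally show ?thesis unfolding b_def using l2_inner_Cauchy_Schwarz[OF nonneg] by simp
  qed
  have "0 < ?\<tau>" by (rule mix_time_pos[OF erg stat]) simp
  have "b 1 \<le> exp (- 2 / real ?\<tau>) * b 0"
  proof (rule log_convex_seq_1_le[of b, OF b_nonneg b_log_convex \<open>0 < ?\<tau>\<close>])
    show "b (k * ?\<tau>) \<le> (osc \<psi>)\<^sup>2 * exp (- 2) ^ k" for k
      unfolding b_def by (rule l2_norm_kernel_op_mpow_mix_time_le[OF erg stat mean])
  qed
  then have "b 0 * b 1 \<le> b 0 * (exp (- 2 / real ?\<tau>) * b 0)"
    using b_nonneg[of 0] by (rule mult_left_mono)
  also have "\<dots> = (exp (- 1 / real ?\<tau>) * b 0)\<^sup>2"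
    by (simp add: power2_eq_square mult_exp_exp mult_ac flip: add_divide_distrib)
  finally have "b 0 * b 1 \<le> (exp (- 1 / real ?\<tau>) * b 0)\<^sup>2" .
  moreover have "(l2_inner \<pi> \<psi> (kernel_op P \<psi>))\<^sup>2 \<le> b 0 * b 1"
    using l2_inner_Cauchy_Schwarz[OF nonneg] by (simp add: b_def kernel_op_mpow_0 mpow_1)
  ultimately have "(l2_inner \<pi> \<psi> (kernel_op P \<psi>))\<^sup>2 \<le> (exp (- 1 / real ?\<tau>) * b 0)\<^sup>2"
    by (rule order_trans[rotated])
  then have "l2_inner \<pi> \<psi> (kernel_op P \<psi>) \<le> exp (- 1 / real ?\<tau>) * b 0"
    by (rule power2_le_imp_le) (use b_nonneg[of 0] in simp)
  then show ?thesis by (simp add: b_def kernel_op_mpow_0)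
qed

lemma poincare_mix_time:
  assumes erg: "ergodic P" and stat: "stationary P \<pi>" and rev: "reversible P \<pi>"
  shows "variance \<pi> \<phi> \<le> (real (mix_time_inv_2e P \<pi>) + 1) * dirichlet_form P \<pi> \<phi>"
proof -
  let ?\<tau> = "real (mix_time_inv_2e P \<pi>)"
  define \<psi> where "\<psi> = (\<lambda>x. \<phi> x - (\<Sum>y\<in>UNIV. \<pi> y * \<phi> y))"
  have sum_1: "(\<Sum>x\<in>UNIV. \<pi> x) = 1" using stat by (simp add: stationary_def)
  have nonneg: "\<And>x. 0 \<le> \<pi> x" using stat by (simp add: stationary_def)
  have "0 < ?\<tau>" using mix_time_pos[OF erg stat] by simp
  have mean: "(\<Sum>x\<in>UNIV. \<pi> x * \<psi> x) = 0"
    unfolding \<psi>_def by (simp add: right_diff_distrib sum_subtractf sum_1 flip: sum_distrib_right)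
  have var: "variance \<pi> \<phi> = l2_inner \<pi> \<psi> \<psi>"
    unfolding \<psi>_def by (rule variance_eq_l2_inner_centered[OF sum_1])
  have "dirichlet_form P \<pi> \<phi> = dirichlet_form P \<pi> \<psi>"
    unfolding \<psi>_def by (rule dirichlet_form_diff_const[symmetric])
  also have "\<dots> = l2_inner \<pi> \<psi> \<psi> - l2_inner \<pi> \<psi> (kernel_op P \<psi>)"
    by (rule dirichlet_form_eq[OF ergodic_stochastic[OF erg] stat])
  finally have dir: "dirichlet_form P \<pi> \<phi> = l2_inner \<pi> \<psi> \<psi> - l2_inner \<pi> \<psi> (kernel_op P \<psi>)" .
  have "0 \<le> l2_inner \<pi> \<psi> \<psi>" by (rule l2_inner_self_nonneg[OF nonneg])
  then have "l2_inner \<pi> \<psi> \<psi> / (?\<tau> + 1) \<le> (1 - exp (- 1 / ?\<tau>)) * l2_inner \<pi> \<psi> \<psi>"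
    using mult_right_mono[OF inverse_add_one_le_one_minus_exp[OF \<open>0 < ?\<tau>\<close>]] by simp
  also have "\<dots> \<le> dirichlet_form P \<pi> \<phi>"
    using reversible_l2_inner_kernel_op_le[OF erg stat rev mean] unfolding dir left_diff_distrib
    by linarith
  finally show ?thesis using \<open>0 < ?\<tau>\<close> by (simp add: var pos_divide_le_eq mult.commute)
qed

section \<open>Comparison of Dirichlet forms via flows\<close>

lemma edge_mult_eq_count_list: "edge_mult e \<gamma> = count_list (path_edges \<gamma>) e"
proof -
  have "length (filter (\<lambda>e'. e' = e) xs) = count_list xs e" for xs
    by (induction xs) auto
  then show ?thesis unfolding edge_mult_def by simp
qed

lemma length_path_edges: "length (path_edges \<gamma>) = path_len \<gamma>"
  unfolding path_edges_def path_len_def by simp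

lemma sum_list_map_eq_sum_count_list:
  fixes f :: "'b \<Rightarrow> 'c::semiring_1"
  assumes "set xs \<subseteq> X" and "finite X"
  shows "sum_list (map f xs) = (\<Sum>e\<in>X. of_nat (count_list xs e) * f e)"
  using assms(1)
proof (induction xs)
  case Nil
  then show ?case by simp
next
  case (Cons a xs)
  have "(\<Sum>e\<in>X. of_nat (count_list (a # xs) e) * f e)
      = (\<Sum>e\<in>X. of_nat (count_list xs e) * f e + (if e = a then f e else 0))"
    by (rule sum.cong) (auto simp: algebra_simps)
  also have "\<dots> = (\<Sum>e\<in>X. of_nat (count_list xs e) * f e) + f a"
    using Cons.prems assms(2) by (simp add: sum.distrib)
  finally show ?case using Cons by (simp add: add.commute)
qed

lemma finite_paths_between: "finite (paths_between P x y)"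
proof -
  have "length \<gamma> \<le> 2 * CARD('a \<times> 'a) + 1" if "\<gamma> \<in> paths_between P x y" for \<gamma> :: "'a list"
  proof -
    have "path_len \<gamma> = (\<Sum>e\<in>UNIV. of_nat (count_list (path_edges \<gamma>) e) * 1)"
      using sum_list_map_eq_sum_count_list[of "path_edges \<gamma>" UNIV "\<lambda>_. 1::nat"]
      by (simp add: length_path_edges[symmetric] sum_list_triv)
    also have "\<dots> \<le> (\<Sum>e\<in>(UNIV::('a \<times> 'a) set). 2)"
      using that unfolding paths_between_def edge_mult_eq_count_list by (intro sum_mono) auto
    finally show ?thesis by (simp add: path_len_def)
  qed
  then have "paths_between P x y \<subseteq> {xs. set xs \<subseteq> UNIV \<and> length xs \<le> 2 * CARD('a \<times> 'a) + 1}"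
    by blast
  then show ?thesis by (rule finite_subset) (rule finite_lists_length_le, simp)
qed

lemma sum_all_paths:
  "(\<Sum>\<gamma>\<in>all_paths P P'. F \<gamma>) = (\<Sum>e\<in>edge_set P'. \<Sum>\<gamma>\<in>paths_between P (fst e) (snd e). F \<gamma>)"
proof -
  have "all_paths P P' = (\<Union>e\<in>edge_set P'. paths_between P (fst e) (snd e))"
    unfolding all_paths_def by (auto simp: case_prod_beta)
  also have "sum F \<dots> = (\<Sum>e\<in>edge_set P'. sum F (paths_between P (fst e) (snd e)))"
  proof (rule sum.UNION_disjoint)
    show "\<forall>e\<in>edge_set P'. finite (paths_between P (fst e) (snd e))"
      by (simp add: finite_paths_between)
    show "\<forall>e\<in>edge_set P'. \<forall>e'\<in>edge_set P'. e \<noteq> e' \<longrightarrow>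
        paths_between P (fst e) (snd e) \<inter> paths_between P (fst e') (snd e') = {}"
      by (auto simp: paths_between_def prod_eq_iff)
  qed simp
  finally show ?thesis .
qed

lemma finite_all_paths: "finite (all_paths P P')"
  unfolding all_paths_def by (auto intro: finite_paths_between)

lemma diff_last_eq_sum_path_edges:
  fixes \<phi> :: "'a \<Rightarrow> real"
  shows "\<phi> a - \<phi> (last (a # xs)) = sum_list (map (\<lambda>e. \<phi> (fst e) - \<phi> (snd e)) (path_edges (a # xs)))"
proof (induction xs arbitrary: a)
  case Nil
  then show ?case by (simp add: path_edges_def)
next
  case (Cons b xs)
  have "path_edges (a # b # xs) = (a, b) # path_edges (b # xs)" by (simp add: path_edges_def)
  then show ?case using Cons[of b] by simp
qed

lemma sum_list_square_le:
  fixes g :: "'b \<Rightarrow> real"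
  shows "(sum_list (map g xs))\<^sup>2 \<le> real (length xs) * sum_list (map (\<lambda>e. (g e)\<^sup>2) xs)"
proof -
  have "(\<Sum>i<length xs. g (xs ! i) * 1)\<^sup>2 \<le> (\<Sum>i<length xs. (g (xs ! i))\<^sup>2) * (\<Sum>i<length xs. 1\<^sup>2)"
    by (rule Cauchy_Schwarz_ineq_sum)
  then show ?thesis by (simp add: sum_list_sum_nth atLeast0LessThan mult.commute)
qed

lemma paths_between_diff_square_le:
  assumes "\<gamma> \<in> paths_between P x y"
  shows "(\<phi> x - \<phi> y)\<^sup>2 \<le> real (path_len \<gamma>) *
     (\<Sum>e\<in>edge_set P. real (edge_mult e \<gamma>) * (\<phi> (fst e) - \<phi> (snd e))\<^sup>2)"
proof -
  obtain a xs where \<gamma>: "\<gamma> = a # xs" and "x = a" and "y = last (a # xs)"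
    using assms unfolding paths_between_def by (cases \<gamma>) auto
  have edges: "set (path_edges \<gamma>) \<subseteq> edge_set P" using assms unfolding paths_between_def by auto
  have "(\<phi> x - \<phi> y)\<^sup>2 = (sum_list (map (\<lambda>e. \<phi> (fst e) - \<phi> (snd e)) (path_edges \<gamma>)))\<^sup>2"
    using diff_last_eq_sum_path_edges[of \<phi> a xs] \<gamma> \<open>x = a\<close> \<open>y = last (a # xs)\<close> by simp
  also have "\<dots> \<le> real (length (path_edges \<gamma>)) *
      sum_list (map (\<lambda>e. (\<phi> (fst e) - \<phi> (snd e))\<^sup>2) (path_edges \<gamma>))"
    by (rule sum_list_square_le)
  also have "sum_list (map (\<lambda>e. (\<phi> (fst e) - \<phi> (snd e))\<^sup>2) (path_edges \<gamma>))
      = (\<Sum>e\<in>edge_set P. real (count_list (path_edges \<gamma>) e) * (\<phi> (fst e) - \<phi> (snd e))\<^sup>2)"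
    by (rule sum_list_map_eq_sum_count_list[OF edges]) simp
  finally show ?thesis by (simp add: length_path_edges edge_mult_eq_count_list)
qed

lemma dirichlet_form_eq_sum_edge_set:
  assumes "stochastic P"
  shows "2 * dirichlet_form P \<pi> \<phi>
    = (\<Sum>e\<in>edge_set P. \<pi> (fst e) * P (fst e) (snd e) * (\<phi> (fst e) - \<phi> (snd e))\<^sup>2)"
proof -
  have "(\<Sum>x\<in>UNIV. \<Sum>y\<in>UNIV. \<pi> x * P x y * (\<phi> x - \<phi> y)\<^sup>2)
      = (\<Sum>e\<in>UNIV. \<pi> (fst e) * P (fst e) (snd e) * (\<phi> (fst e) - \<phi> (snd e))\<^sup>2)"
    by (simp add: sum.cartesian_product case_prod_beta flip: UNIV_Times_UNIV)
  also have "\<dots> = (\<Sum>e\<in>edge_set P. \<pi> (fst e) * P (fst e) (snd e) * (\<phi> (fst e) - \<phi> (snd e))\<^sup>2)"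
  proof (rule sum.mono_neutral_right)
    show "\<forall>e\<in>UNIV - edge_set P. \<pi> (fst e) * P (fst e) (snd e) * (\<phi> (fst e) - \<phi> (snd e))\<^sup>2 = 0"
      using assms by (auto simp: edge_set_def stochastic_def intro: antisym)
  qed simp_all
  finally show ?thesis by (simp add: dirichlet_form_def)
qed

lemma flow_congestion_edge_le:
  "(z, w) \<in> edge_set P \<Longrightarrow> flow_congestion_edge P \<pi> P' f z w \<le> flow_congestion P \<pi> P' f"
  unfolding flow_congestion_def by (rule Max_ge) (auto intro: image_eqI[of _ _ "(z, w)"])

lemma flow_congestion_nonneg:
  assumes "stochastic P" and "\<And>x. 0 < \<pi> x" and "is_flow P P' \<pi>' f"
  shows "0 \<le> flow_congestion P \<pi> P' f"
proof -
  fix x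
  have "\<exists>y. 0 < P x y"
    using assms(1) unfolding stochastic_def by (metis not_le sum_nonpos zero_less_one)
  then obtain y where "(x, y) \<in> edge_set P" by (auto simp: edge_set_def)
  have "0 \<le> flow_congestion_edge P \<pi> P' f x y"
    unfolding flow_congestion_edge_def using assms(2,3) \<open>(x, y) \<in> edge_set P\<close>
    by (intro mult_nonneg_nonneg sum_nonneg) (auto simp: is_flow_def edge_set_def less_imp_le)
  also have "\<dots> \<le> flow_congestion P \<pi> P' f"
    by (rule flow_congestion_edge_le) fact
  finally show ?thesis .
qed

lemma load_eq_flow_congestion_edge:
  assumes "(z, w) \<in> edge_set P" and "0 < \<pi> z"
  shows "(\<Sum>\<gamma>\<in>all_paths P P'. real (edge_mult (z, w) \<gamma>) * real (path_len \<gamma>) * f \<gamma>)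
    = \<pi> z * P z w * flow_congestion_edge P \<pi> P' f z w"
proof -
  have "0 < \<pi> z * P z w" using assms by (simp add: edge_set_def)
  have "(\<Sum>\<gamma>\<in>all_paths P P'. real (edge_mult (z, w) \<gamma>) * real (path_len \<gamma>) * f \<gamma>)
      = (\<Sum>\<gamma>\<in>{\<gamma>\<in>all_paths P P'. 0 < edge_mult (z, w) \<gamma>}.
           real (edge_mult (z, w) \<gamma>) * real (path_len \<gamma>) * f \<gamma>)"
    by (rule sum.mono_neutral_right[OF finite_all_paths]) auto
  moreover have "\<pi> z \<noteq> 0" and "P z w \<noteq> 0" using \<open>0 < \<pi> z * P z w\<close> by auto
  ultimately show ?thesis by (simp add: flow_congestion_edge_def)
qed

lemma dirichlet_form_le_sum_all_paths:
  assumes "stochastic P'" and flow: "is_flow P P' \<pi> f"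
  shows "2 * dirichlet_form P' \<pi> \<phi> \<le> (\<Sum>\<gamma>\<in>all_paths P P'. f \<gamma> * real (path_len \<gamma>) *
           (\<Sum>e\<in>edge_set P. real (edge_mult e \<gamma>) * (\<phi> (fst e) - \<phi> (snd e))\<^sup>2))"
    (is "_ \<le> (\<Sum>\<gamma>\<in>_. ?W \<gamma>)")
proof -
  have "2 * dirichlet_form P' \<pi> \<phi>
      = (\<Sum>e\<in>edge_set P'. \<pi> (fst e) * P' (fst e) (snd e) * (\<phi> (fst e) - \<phi> (snd e))\<^sup>2)"
    by (rule dirichlet_form_eq_sum_edge_set[OF assms(1)])
  also have "\<dots> \<le> (\<Sum>e\<in>edge_set P'. \<Sum>\<gamma>\<in>paths_between P (fst e) (snd e). ?W \<gamma>)"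
  proof (rule sum_mono)
    fix e assume e: "e \<in> edge_set P'"
    obtain x y where e_eq: "e = (x, y)" by force
    have "(\<Sum>\<gamma>\<in>paths_between P x y. f \<gamma>) = \<pi> x * P' x y"
      using flow e unfolding e_eq is_flow_def by auto
    then have "\<pi> x * P' x y * (\<phi> x - \<phi> y)\<^sup>2 = (\<Sum>\<gamma>\<in>paths_between P x y. f \<gamma> * (\<phi> x - \<phi> y)\<^sup>2)"
      by (simp flip: sum_distrib_right)
    also have "\<dots> \<le> (\<Sum>\<gamma>\<in>paths_between P x y. ?W \<gamma>)"
    proof (rule sum_mono)
      fix \<gamma> assume \<gamma>: "\<gamma> \<in> paths_between P x y"
      then have "0 \<le> f \<gamma>"
        using flow e unfolding e_eq is_flow_def all_paths_def by blast
      then show "f \<gamma> * (\<phi> x - \<phi> y)\<^sup>2 \<le> ?W \<gamma>"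
        using paths_between_diff_square_le[OF \<gamma>, of \<phi>] by (simp add: mult_left_mono mult.assoc)
    qed
    finally show "\<pi> (fst e) * P' (fst e) (snd e) * (\<phi> (fst e) - \<phi> (snd e))\<^sup>2
        \<le> (\<Sum>\<gamma>\<in>paths_between P (fst e) (snd e). ?W \<gamma>)"
      by (simp add: e_eq)
  qed
  also have "\<dots> = (\<Sum>\<gamma>\<in>all_paths P P'. ?W \<gamma>)"
    by (rule sum_all_paths[symmetric])
  finally show ?thesis .
qed

lemma sum_all_paths_le_flow_congestion:
  assumes "stochastic P" and "\<And>x. 0 < \<pi> x"
  shows "(\<Sum>\<gamma>\<in>all_paths P P'. f \<gamma> * real (path_len \<gamma>) *
           (\<Sum>e\<in>edge_set P. real (edge_mult e \<gamma>) * (\<phi> (fst e) - \<phi> (snd e))\<^sup>2))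
    \<le> flow_congestion P \<pi> P' f * (2 * dirichlet_form P \<pi> \<phi>)"
proof -
  let ?g = "\<lambda>e. (\<phi> (fst e) - \<phi> (snd e))\<^sup>2"
  let ?A = "flow_congestion P \<pi> P' f"
  have "(\<Sum>\<gamma>\<in>all_paths P P'. f \<gamma> * real (path_len \<gamma>) * (\<Sum>e\<in>edge_set P. real (edge_mult e \<gamma>) * ?g e))
      = (\<Sum>\<gamma>\<in>all_paths P P'. \<Sum>e\<in>edge_set P. ?g e * (real (edge_mult e \<gamma>) * real (path_len \<gamma>) * f \<gamma>))"
    by (simp add: sum_distrib_left mult_ac)
  also have "\<dots> = (\<Sum>e\<in>edge_set P. ?g e *
      (\<Sum>\<gamma>\<in>all_paths P P'. real (edge_mult e \<gamma>) * real (path_len \<gamma>) * f \<gamma>))"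
    by (subst sum.swap) (simp add: sum_distrib_left)
  also have "\<dots> \<le> (\<Sum>e\<in>edge_set P. ?g e * (\<pi> (fst e) * P (fst e) (snd e) * ?A))"
  proof (rule sum_mono)
    fix e assume e: "e \<in> edge_set P"
    obtain z w where e_eq: "e = (z, w)" by force
    have "0 < \<pi> z * P z w" using e assms(2)[of z] by (simp add: e_eq edge_set_def)
    have "(\<Sum>\<gamma>\<in>all_paths P P'. real (edge_mult e \<gamma>) * real (path_len \<gamma>) * f \<gamma>)
        = \<pi> z * P z w * flow_congestion_edge P \<pi> P' f z w"
      using e assms(2)[of z] unfolding e_eq by (rule load_eq_flow_congestion_edge)
    also have "\<dots> \<le> \<pi> z * P z w * ?A"
      using e \<open>0 < \<pi> z * P z w\<close> unfolding e_eq
      by (intro mult_left_mono flow_congestion_edge_le) simp_all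
    finally have "(\<Sum>\<gamma>\<in>all_paths P P'. real (edge_mult e \<gamma>) * real (path_len \<gamma>) * f \<gamma>)
        \<le> \<pi> z * P z w * ?A" .
    then show "?g e * (\<Sum>\<gamma>\<in>all_paths P P'. real (edge_mult e \<gamma>) * real (path_len \<gamma>) * f \<gamma>)
        \<le> ?g e * (\<pi> (fst e) * P (fst e) (snd e) * ?A)"
      by (simp add: e_eq mult_left_mono)
  qed
  also have "\<dots> = ?A * (2 * dirichlet_form P \<pi> \<phi>)"
    by (simp add: dirichlet_form_eq_sum_edge_set[OF assms(1)] sum_distrib_left mult_ac)
  finally show ?thesis .
qed

theorem dirichlet_form_comparison:
  assumes "stochastic P" and "stochastic P'" and "\<And>x. 0 < \<pi> x" and "is_flow P P' \<pi> f"
  shows "dirichlet_form P' \<pi> \<phi> \<le> flow_congestion P \<pi> P' f * dirichlet_form P \<pi> \<phi>"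
proof -
  have "2 * dirichlet_form P' \<pi> \<phi> \<le> flow_congestion P \<pi> P' f * (2 * dirichlet_form P \<pi> \<phi>)"
    using dirichlet_form_le_sum_all_paths[OF assms(2,4)] sum_all_paths_le_flow_congestion[OF assms(1,3)]
    by (rule order_trans)
  then show ?thesis by simp
qed

theorem poincare_of_flow:
  assumes "stochastic P" and "ergodic P'" and "stationary P' \<pi>" and "reversible P' \<pi>"
    and "is_flow P P' \<pi> f"
  shows "variance \<pi> \<phi>
    \<le> flow_congestion P \<pi> P' f * (real (mix_time_inv_2e P' \<pi>) + 1) * dirichlet_form P \<pi> \<phi>"
proof -
  have "variance \<pi> \<phi> \<le> (real (mix_time_inv_2e P' \<pi>) + 1) * dirichlet_form P' \<pi> \<phi>"
    by (rule poincare_mix_time[OF assms(2-4)])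
  also have "\<dots> \<le> (real (mix_time_inv_2e P' \<pi>) + 1) * (flow_congestion P \<pi> P' f * dirichlet_form P \<pi> \<phi>)"
    using ergodic_stationary_pos[OF assms(2,3)]
    by (intro mult_left_mono dirichlet_form_comparison[OF assms(1) ergodic_stochastic[OF assms(2)] _ assms(5)])
      simp_all
  finally show ?thesis by (simp add: mult_ac)
qed

section \<open>The continuized chain\<close>

definition poisson_avg :: "(nat \<Rightarrow> real) \<Rightarrow> real \<Rightarrow> real" where
  "poisson_avg a t = (\<Sum>k. exp (- t) * t ^ k / fact k * a k)"

lemma cont_kernel_eq_poisson_avg: "cont_kernel P t x y = poisson_avg (\<lambda>k. mpow P k x y) t"
  unfolding cont_kernel_def poisson_avg_def ..

lemma summable_bounded_exp_series:
  fixes a :: "nat \<Rightarrow> real"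
  assumes "\<And>k. \<bar>a k\<bar> \<le> M"
  shows "summable (\<lambda>k. a k / fact k * t ^ k)"
proof (rule summable_comparison_test')
  show "summable (\<lambda>k. M * (inverse (fact k) * \<bar>t\<bar> ^ k))"
    by (intro summable_mult summable_exp)
  show "norm (a k / fact k * t ^ k) \<le> M * (inverse (fact k) * \<bar>t\<bar> ^ k)" for k
    using assms[of k] by (simp add: abs_mult power_abs divide_inverse mult_right_mono)
qed

lemma poisson_avg_eq:
  fixes a :: "nat \<Rightarrow> real"
  assumes "\<And>k. \<bar>a k\<bar> \<le> M"
  shows "poisson_avg a t = exp (- t) * (\<Sum>k. a k / fact k * t ^ k)"
proof -
  have "poisson_avg a t = (\<Sum>k. exp (- t) * (a k / fact k * t ^ k))"
    unfolding poisson_avg_def by (simp add: mult_ac)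
  also have "\<dots> = exp (- t) * (\<Sum>k. a k / fact k * t ^ k)"
    by (rule suminf_mult) (rule summable_bounded_exp_series[OF assms])
  finally show ?thesis .
qed

lemma summable_poisson_avg:
  fixes a :: "nat \<Rightarrow> real"
  assumes "\<And>k. \<bar>a k\<bar> \<le> M"
  shows "summable (\<lambda>k. exp (- t) * t ^ k / fact k * a k)"
proof -
  have "summable (\<lambda>k. exp (- t) * (a k / fact k * t ^ k))"
    by (rule summable_mult) (rule summable_bounded_exp_series[OF assms])
  then show ?thesis by (simp add: mult_ac)
qed

lemma poisson_avg_has_real_derivative:
  fixes a :: "nat \<Rightarrow> real"
  assumes "\<And>k. \<bar>a k\<bar> \<le> M"
  shows "(poisson_avg a has_real_derivative (poisson_avg (\<lambda>k. a (Suc k)) t - poisson_avg a t)) (at t)"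
proof -
  define c where "c k = a k / fact k" for k
  define G where "G y = (\<Sum>k. c k * y ^ k)" for y
  have G_deriv: "(G has_real_derivative (\<Sum>k. diffs c k * t ^ k)) (at t)"
    unfolding G_def c_def
    by (rule termdiffs_strong_converges_everywhere) (rule summable_bounded_exp_series[OF assms])
  have diffs_c: "diffs c k = a (Suc k) / fact k" for k
    by (simp add: diffs_def c_def del: of_nat_Suc)
  have "poisson_avg a = (\<lambda>y. exp (- y) * G y)"
    using poisson_avg_eq[OF assms] by (simp add: fun_eq_iff G_def c_def)
  moreover have "poisson_avg (\<lambda>k. a (Suc k)) t = exp (- t) * (\<Sum>k. diffs c k * t ^ k)"
    using poisson_avg_eq[of "\<lambda>k. a (Suc k)" M t] assms by (simp add: diffs_c)
  moreover have "((\<lambda>y. exp (- y) * G y) has_real_derivative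
      - exp (- t) * G t + (\<Sum>k. diffs c k * t ^ k) * exp (- t)) (at t)"
    by (rule DERIV_mult[OF _ G_deriv]) (auto intro!: derivative_eq_intros)
  ultimately show ?thesis by (simp add: algebra_simps)
qed

lemma poisson_avg_sum:
  fixes b :: "'b \<Rightarrow> nat \<Rightarrow> real"
  assumes "finite Z" and "\<And>z k. \<bar>b z k\<bar> \<le> M"
  shows "poisson_avg (\<lambda>k. \<Sum>z\<in>Z. b z k * c z) t = (\<Sum>z\<in>Z. poisson_avg (b z) t * c z)"
proof -
  have "poisson_avg (\<lambda>k. \<Sum>z\<in>Z. b z k * c z) t
      = (\<Sum>k. \<Sum>z\<in>Z. exp (- t) * t ^ k / fact k * b z k * c z)"
    unfolding poisson_avg_def by (simp add: sum_distrib_left sum_divide_distrib mult_ac)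
  also have "\<dots> = (\<Sum>z\<in>Z. \<Sum>k. exp (- t) * t ^ k / fact k * b z k * c z)"
    by (rule suminf_sum) (intro summable_mult2 summable_poisson_avg[where M = M] assms(2))
  also have "\<dots> = (\<Sum>z\<in>Z. poisson_avg (b z) t * c z)"
    unfolding poisson_avg_def
    by (intro sum.cong refl suminf_mult2[symmetric] summable_poisson_avg[where M = M] assms(2))
  finally show ?thesis .
qed

lemma poisson_avg_1: "poisson_avg (\<lambda>k. 1) t = 1"
proof -
  have "poisson_avg (\<lambda>k. 1) t = exp (- t) * (\<Sum>k. 1 / fact k * t ^ k)"
    by (rule poisson_avg_eq[of _ 1]) simp
  also have "(\<Sum>k. 1 / fact k * t ^ k) = exp t"
    using exp_converges[of t] by (simp add: sums_iff divide_inverse mult.commute)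
  finally show ?thesis by (simp add: exp_minus)
qed

lemma poisson_avg_0: "poisson_avg a 0 = a 0"
proof -
  have "poisson_avg a 0 = (\<Sum>k. if k = 0 then a 0 else 0)"
    unfolding poisson_avg_def by (intro arg_cong[where f = suminf]) (auto simp: fun_eq_iff)
  also have "\<dots> = a 0" using suminf_finite[of "{0}" "\<lambda>k. if k = 0 then a 0 else 0"] by simp
  finally show ?thesis .
qed

lemma abs_mpow_le_1: "stochastic P \<Longrightarrow> \<bar>mpow P k x y\<bar> \<le> 1"
  by (simp add: mpow_nonneg mpow_le_1)

lemma cont_kernel_has_real_derivative:
  assumes "stochastic P"
  shows "((\<lambda>t. cont_kernel P t x y) has_real_derivative
     (\<Sum>z\<in>UNIV. cont_kernel P t x z * P z y) - cont_kernel P t x y) (at t)"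
proof -
  have "((poisson_avg (\<lambda>k. mpow P k x y)) has_real_derivative
      (poisson_avg (\<lambda>k. mpow P (Suc k) x y) t - poisson_avg (\<lambda>k. mpow P k x y) t)) (at t)"
    by (rule poisson_avg_has_real_derivative[of _ 1]) (rule abs_mpow_le_1[OF assms])
  moreover have "poisson_avg (\<lambda>k. mpow P (Suc k) x y) t
      = (\<Sum>z\<in>UNIV. poisson_avg (\<lambda>k. mpow P k x z) t * P z y)"
    using poisson_avg_sum[of UNIV "\<lambda>z k. mpow P k x z" 1 "\<lambda>z. P z y" t] abs_mpow_le_1[OF assms]
    by simp
  ultimately show ?thesis unfolding cont_kernel_eq_poisson_avg by (simp add: fun_eq_iff)
qed

lemma cont_kernel_row_sum:
  assumes "stochastic P"
  shows "(\<Sum>y\<in>UNIV. cont_kernel P t x y) = 1"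
proof -
  have "(\<Sum>y\<in>UNIV. cont_kernel P t x y) = (\<Sum>y\<in>UNIV. poisson_avg (\<lambda>k. mpow P k x y) t * 1)"
    unfolding cont_kernel_eq_poisson_avg by simp
  also have "\<dots> = poisson_avg (\<lambda>k. \<Sum>y\<in>UNIV. mpow P k x y * 1) t"
    by (rule poisson_avg_sum[of UNIV _ 1, symmetric]) (auto simp: abs_mpow_le_1 assms)
  also have "\<dots> = 1" using mpow_row_sum[OF assms] poisson_avg_1 by simp
  finally show ?thesis .
qed

lemma cont_kernel_0: "cont_kernel P 0 x y = (if x = y then 1 else 0)"
  unfolding cont_kernel_eq_poisson_avg poisson_avg_0 by simp

definition chi_square :: "('a::finite \<Rightarrow> real) \<Rightarrow> ('a \<Rightarrow> real) \<Rightarrow> real" where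
  "chi_square \<mu> \<pi> = (\<Sum>y\<in>UNIV. (\<mu> y - \<pi> y)\<^sup>2 / \<pi> y)"

lemma tvd_le_sqrt_chi_square:
  assumes pos: "\<And>y. 0 < \<pi> y" and "(\<Sum>y\<in>UNIV. \<pi> y) = 1"
  shows "tvd \<mu> \<pi> \<le> 1 / 2 * sqrt (chi_square \<mu> \<pi>)"
proof -
  have "(\<Sum>y\<in>UNIV. sqrt (\<pi> y) * (\<bar>\<mu> y - \<pi> y\<bar> / sqrt (\<pi> y)))\<^sup>2
      \<le> (\<Sum>y\<in>UNIV. (sqrt (\<pi> y))\<^sup>2) * (\<Sum>y\<in>UNIV. (\<bar>\<mu> y - \<pi> y\<bar> / sqrt (\<pi> y))\<^sup>2)"
    by (rule Cauchy_Schwarz_ineq_sum)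
  moreover have "sqrt (\<pi> y) * (\<bar>\<mu> y - \<pi> y\<bar> / sqrt (\<pi> y)) = \<bar>\<mu> y - \<pi> y\<bar>" for y
    using pos[of y] by simp
  moreover have "(sqrt (\<pi> y))\<^sup>2 = \<pi> y" and "(\<bar>\<mu> y - \<pi> y\<bar> / sqrt (\<pi> y))\<^sup>2 = (\<mu> y - \<pi> y)\<^sup>2 / \<pi> y"
    for y using pos[of y] by (simp_all add: power_divide)
  ultimately have "(\<Sum>y\<in>UNIV. \<bar>\<mu> y - \<pi> y\<bar>)\<^sup>2 \<le> chi_square \<mu> \<pi>"
    using assms(2) by (simp add: chi_square_def)
  then show ?thesis unfolding tvd_def by (simp add: real_le_rsqrt)
qed

lemma chi_square_eq_variance:
  assumes pos: "\<And>y. 0 < \<pi> y" and "(\<Sum>y\<in>UNIV. \<mu> y) = (\<Sum>y\<in>UNIV. \<pi> y)"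
  shows "chi_square \<mu> \<pi> = variance \<pi> (\<lambda>y. (\<mu> y - \<pi> y) / \<pi> y)"
proof -
  have "(\<Sum>y\<in>UNIV. \<pi> y * ((\<mu> y - \<pi> y) / \<pi> y)) = (\<Sum>y\<in>UNIV. \<mu> y - \<pi> y)"
    using pos by (intro sum.cong) (auto simp: less_imp_neq[symmetric])
  also have "\<dots> = 0" using assms(2) by (simp add: sum_subtractf)
  moreover have "chi_square \<mu> \<pi> = l2_inner \<pi> (\<lambda>y. (\<mu> y - \<pi> y) / \<pi> y) (\<lambda>y. (\<mu> y - \<pi> y) / \<pi> y)"
    unfolding chi_square_def l2_inner_def using pos
    by (intro sum.cong) (auto simp: power2_eq_square field_simps less_imp_neq[symmetric])
  ultimately show ?thesis by (simp add: variance_def)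
qed

lemma sum_chi_square_deriv_eq_dirichlet_form:
  assumes "stochastic P" and stat: "stationary P \<pi>" and pos: "\<And>y. 0 < \<pi> y"
  shows "(\<Sum>y\<in>UNIV. 2 * (\<mu> y - \<pi> y) * ((\<Sum>z\<in>UNIV. \<mu> z * P z y) - \<mu> y) / \<pi> y)
    = - 2 * dirichlet_form P \<pi> (\<lambda>y. (\<mu> y - \<pi> y) / \<pi> y)"
proof -
  define h where "h = (\<lambda>y. (\<mu> y - \<pi> y) / \<pi> y)"
  have diff: "\<mu> y - \<pi> y = \<pi> y * h y" for y using pos[of y] by (simp add: h_def)
  have drift: "(\<Sum>z\<in>UNIV. \<mu> z * P z y) - \<mu> y = (\<Sum>z\<in>UNIV. \<pi> z * h z * P z y) - \<pi> y * h y" for y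
  proof -
    have "(\<Sum>z\<in>UNIV. \<mu> z * P z y) = (\<Sum>z\<in>UNIV. (\<mu> z - \<pi> z) * P z y) + (\<Sum>z\<in>UNIV. \<pi> z * P z y)"
      by (simp add: algebra_simps flip: sum.distrib)
    then show ?thesis using stat diff by (simp add: stationary_def algebra_simps)
  qed
  have cross: "(\<Sum>y\<in>UNIV. h y * (\<Sum>z\<in>UNIV. \<pi> z * h z * P z y)) = l2_inner \<pi> h (kernel_op P h)"
  proof -
    have "(\<Sum>y\<in>UNIV. h y * (\<Sum>z\<in>UNIV. \<pi> z * h z * P z y))
        = (\<Sum>y\<in>UNIV. \<Sum>z\<in>UNIV. \<pi> z * h z * (P z y * h y))"
      by (simp add: sum_distrib_left mult_ac)
    also have "\<dots> = (\<Sum>z\<in>UNIV. \<Sum>y\<in>UNIV. \<pi> z * h z * (P z y * h y))"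
      by (rule sum.swap)
    finally show ?thesis by (simp add: l2_inner_def kernel_op_def sum_distrib_left)
  qed
  have "(\<Sum>y\<in>UNIV. 2 * (\<mu> y - \<pi> y) * ((\<Sum>z\<in>UNIV. \<mu> z * P z y) - \<mu> y) / \<pi> y)
      = (\<Sum>y\<in>UNIV. 2 * (h y * (\<Sum>z\<in>UNIV. \<pi> z * h z * P z y)) - 2 * (\<pi> y * h y * h y))"
  proof (rule sum.cong)
    fix y
    show "2 * (\<mu> y - \<pi> y) * ((\<Sum>z\<in>UNIV. \<mu> z * P z y) - \<mu> y) / \<pi> y
        = 2 * (h y * (\<Sum>z\<in>UNIV. \<pi> z * h z * P z y)) - 2 * (\<pi> y * h y * h y)"
      unfolding drift diff using pos[of y] by (simp add: field_simps)
  qed simp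
  also have "\<dots> = 2 * l2_inner \<pi> h (kernel_op P h) - 2 * l2_inner \<pi> h h"
    by (simp add: sum_subtractf l2_inner_def cross flip: sum_distrib_left)
  also have "\<dots> = - 2 * dirichlet_form P \<pi> h"
    using dirichlet_form_eq[OF assms(1,2), of h] by simp
  finally show ?thesis by (simp add: h_def)
qed

lemma chi_square_cont_kernel_has_real_derivative:
  assumes "stochastic P" and "stationary P \<pi>" and "\<And>y. 0 < \<pi> y"
  shows "((\<lambda>t. chi_square (cont_kernel P t x) \<pi>) has_real_derivative
     - 2 * dirichlet_form P \<pi> (\<lambda>y. (cont_kernel P t x y - \<pi> y) / \<pi> y)) (at t)"
proof -
  let ?\<mu> = "\<lambda>y. cont_kernel P t x y"
  have "((\<lambda>t. (cont_kernel P t x y - \<pi> y)\<^sup>2 / \<pi> y) has_real_derivative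
      2 * (?\<mu> y - \<pi> y) * ((\<Sum>z\<in>UNIV. ?\<mu> z * P z y) - ?\<mu> y) / \<pi> y) (at t)" for y
    using assms(3)[of y]
    by (auto intro!: derivative_eq_intros cont_kernel_has_real_derivative[OF assms(1)])
  then have "((\<lambda>t. chi_square (cont_kernel P t x) \<pi>) has_real_derivative
      (\<Sum>y\<in>UNIV. 2 * (?\<mu> y - \<pi> y) * ((\<Sum>z\<in>UNIV. ?\<mu> z * P z y) - ?\<mu> y) / \<pi> y)) (at t)"
    unfolding chi_square_def by (rule DERIV_sum)
  then show ?thesis
    unfolding sum_chi_square_deriv_eq_dirichlet_form[OF assms] .
qed

lemma chi_square_cont_kernel_0:
  assumes "\<And>y. 0 < \<pi> y" and "(\<Sum>y\<in>UNIV. \<pi> y) = 1"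
  shows "chi_square (cont_kernel P 0 x) \<pi> = 1 / \<pi> x - 1"
proof -
  have "chi_square (cont_kernel P 0 x) \<pi>
      = (\<Sum>y\<in>UNIV. (if y = x then 1 / \<pi> x else 0) - 2 * (if y = x then 1 else 0) + \<pi> y)"
    unfolding chi_square_def cont_kernel_0 using assms(1)
    by (intro sum.cong) (auto simp: power2_eq_square field_simps less_imp_neq[symmetric])
  also have "\<dots> = 1 / \<pi> x - 1" using assms(2) by (simp add: sum.distrib sum_subtractf)
  finally show ?thesis .
qed

lemma exp_decay_of_deriv_le:
  fixes V V' :: "real \<Rightarrow> real"
  assumes deriv: "\<And>s. (V has_real_derivative V' s) (at s)"
    and le: "\<And>s. V' s \<le> - c * V s" and "0 \<le> t"
  shows "V t \<le> exp (- c * t) * V 0"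
proof -
  have "exp (c * t) * V t \<le> exp (c * 0) * V 0"
  proof (rule DERIV_nonpos_imp_nonincreasing[OF \<open>0 \<le> t\<close>])
    fix s
    have "((\<lambda>s. exp (c * s) * V s) has_real_derivative exp (c * s) * (c * V s + V' s)) (at s)"
      by (auto intro!: derivative_eq_intros deriv simp: algebra_simps)
    moreover have "exp (c * s) * (c * V s + V' s) \<le> 0"
      using le[of s] by (intro mult_nonneg_nonpos) auto
    ultimately show "\<exists>y. ((\<lambda>s. exp (c * s) * V s) has_real_derivative y) (at s) \<and> y \<le> 0"
      by blast
  qed
  then show ?thesis by (simp add: exp_minus field_simps)
qed

lemma chi_square_nonneg: "(\<And>y. 0 < \<pi> y) \<Longrightarrow> 0 \<le> chi_square \<mu> \<pi>"
  unfolding chi_square_def by (intro sum_nonneg) (simp add: less_imp_le)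

lemma chi_square_cont_kernel_le_dirichlet_form:
  assumes st: "stochastic P" and "stationary P \<pi>" and pos: "\<And>y. 0 < \<pi> y"
    and poincare: "\<And>\<phi>. variance \<pi> \<phi> \<le> B * dirichlet_form P \<pi> \<phi>"
  shows "chi_square (cont_kernel P t x) \<pi> \<le> B * dirichlet_form P \<pi> (\<lambda>y. (cont_kernel P t x y - \<pi> y) / \<pi> y)"
proof -
  have "(\<Sum>y\<in>UNIV. \<pi> y) = 1" using \<open>stationary P \<pi>\<close> by (simp add: stationary_def)
  then have "chi_square (cont_kernel P t x) \<pi> = variance \<pi> (\<lambda>y. (cont_kernel P t x y - \<pi> y) / \<pi> y)"
    by (intro chi_square_eq_variance[OF pos]) (simp add: cont_kernel_row_sum[OF st])
  then show ?thesis using poincare by simp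
qed

lemma chi_square_cont_kernel_decay:
  assumes st: "stochastic P" and stat: "stationary P \<pi>" and pos: "\<And>y. 0 < \<pi> y"
    and poincare: "\<And>\<phi>. variance \<pi> \<phi> \<le> B * dirichlet_form P \<pi> \<phi>" and "0 < B" and "0 \<le> t"
  shows "chi_square (cont_kernel P t x) \<pi> \<le> exp (- (2 / B) * t) * chi_square (cont_kernel P 0 x) \<pi>"
proof (rule exp_decay_of_deriv_le[where V = "\<lambda>s. chi_square (cont_kernel P s x) \<pi>"
      and V' = "\<lambda>s. - 2 * dirichlet_form P \<pi> (\<lambda>y. (cont_kernel P s x y - \<pi> y) / \<pi> y)"])
  show "((\<lambda>s. chi_square (cont_kernel P s x) \<pi>) has_real_derivative
      - 2 * dirichlet_form P \<pi> (\<lambda>y. (cont_kernel P s x y - \<pi> y) / \<pi> y)) (at s)" for s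
    by (rule chi_square_cont_kernel_has_real_derivative[OF st stat pos])
  show "- 2 * dirichlet_form P \<pi> (\<lambda>y. (cont_kernel P s x y - \<pi> y) / \<pi> y)
      \<le> - (2 / B) * chi_square (cont_kernel P s x) \<pi>" for s
    using chi_square_cont_kernel_le_dirichlet_form[OF st stat pos poincare, of s x] \<open>0 < B\<close>
    by (simp add: field_simps)
qed fact

lemma tvd_cont_kernel_le_of_poincare:
  assumes st: "stochastic P" and stat: "stationary P \<pi>" and pos: "\<And>y. 0 < \<pi> y"
    and poincare: "\<And>\<phi>. variance \<pi> \<phi> \<le> B * dirichlet_form P \<pi> \<phi>" and "0 \<le> B"
    and "0 < \<epsilon>" and "0 \<le> t" and t: "B * ln (1 / (\<epsilon>\<^sup>2 * \<pi> x)) \<le> 2 * t"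
  shows "tvd (cont_kernel P t x) \<pi> \<le> \<epsilon>"
proof -
  let ?V = "\<lambda>s. chi_square (cont_kernel P s x) \<pi>"
  have sum_1: "(\<Sum>y\<in>UNIV. \<pi> y) = 1" using stat by (simp add: stationary_def)
  have "?V t \<le> \<epsilon>\<^sup>2"
  proof (cases "B = 0")
    case True
    then have "?V t \<le> 0"
      using chi_square_cont_kernel_le_dirichlet_form[OF st stat pos poincare, of t x] by simp
    then show ?thesis by (rule order_trans) simp
  next
    case False
    then have "0 < B" using \<open>0 \<le> B\<close> by simp
    have "ln (1 / (\<epsilon>\<^sup>2 * \<pi> x)) \<le> 2 / B * t" using t \<open>0 < B\<close> by (simp add: field_simps)
    then have "exp (- (2 / B) * t) \<le> exp (- ln (1 / (\<epsilon>\<^sup>2 * \<pi> x)))" by simp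
    also have "\<dots> = \<epsilon>\<^sup>2 * \<pi> x" using \<open>0 < \<epsilon>\<close> pos[of x] by (simp add: ln_div)
    moreover have "0 \<le> ?V 0" by (rule chi_square_nonneg) (rule pos)
    ultimately have "exp (- (2 / B) * t) * ?V 0 \<le> (\<epsilon>\<^sup>2 * \<pi> x) * (1 / \<pi> x)"
      using chi_square_cont_kernel_0[OF pos sum_1, of P x] pos[of x] by (intro mult_mono) simp_all
    then show ?thesis
      using chi_square_cont_kernel_decay[OF st stat pos poincare \<open>0 < B\<close> \<open>0 \<le> t\<close>, of x] pos[of x]
      by simp
  qed
  then have "sqrt (?V t) \<le> \<epsilon>" using \<open>0 < \<epsilon>\<close> by (simp add: real_le_lsqrt)
  then show ?thesis using tvd_le_sqrt_chi_square[OF pos sum_1, of "cont_kernel P t x"] \<open>0 < \<epsilon>\<close> by simp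
qed

lemma cont_mix_time_from_le:
  assumes "0 \<le> T" and "\<And>t. T \<le> t \<Longrightarrow> tvd (cont_kernel P t x) \<pi> \<le> \<epsilon>"
  shows "cont_mix_time_from P \<pi> x \<epsilon> \<le> T"
  unfolding cont_mix_time_from_def
proof (rule field_le_epsilon)
  fix d :: real
  assume "0 < d"
  then have "T + d \<in> {t. 0 < t \<and> (\<forall>t'\<ge>t. tvd (cont_kernel P t' x) \<pi> \<le> \<epsilon>)}"
    using assms by auto
  then show "Inf {t. 0 < t \<and> (\<forall>t'\<ge>t. tvd (cont_kernel P t' x) \<pi> \<le> \<epsilon>)} \<le> T + d"
    by (rule cInf_lower) (rule bdd_belowI[of _ 0], auto)
qed

theorem theorem26:
  fixes P P' :: "'a::finite \<Rightarrow> 'a \<Rightarrow> real"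
    and \<pi> :: "'a \<Rightarrow> real"
    and f :: "'a list \<Rightarrow> real"
    and \<epsilon> :: real and x :: 'a
  assumes "ergodic P" and "stationary P \<pi>"
    and "ergodic P'" and "stationary P' \<pi>" and "reversible P' \<pi>"
    and "is_flow P P' \<pi> f"
    and "\<epsilon> > 0" and "\<epsilon> \<le> 1"
  shows "cont_mix_time_from P \<pi> x \<epsilon>
    \<le> flow_congestion P \<pi> P' f / 2 * (real (mix_time P' \<pi> (1 / (2 * exp 1))) + 1)
       * ln (1 / (\<epsilon>\<^sup>2 * \<pi> x))"
proof -
  let ?A = "flow_congestion P \<pi> P' f"
  have st: "stochastic P" using assms(1) by (rule ergodic_stochastic)
  have pos: "\<And>y. 0 < \<pi> y" using ergodic_stationary_pos[OF assms(1,2)] .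
  have "0 \<le> ?A" by (rule flow_congestion_nonneg[OF st pos assms(6)])
  have "0 \<le> ln (1 / (\<epsilon>\<^sup>2 * \<pi> x))"
    using stationary_le_1[OF assms(2)] assms(7,8) pos[of x] by (simp add: power_le_one mult_le_one)
  then have T_nonneg: "0 \<le> ?A / 2 * (real (mix_time_inv_2e P' \<pi>) + 1) * ln (1 / (\<epsilon>\<^sup>2 * \<pi> x))"
    using \<open>0 \<le> ?A\<close> by simp
  show ?thesis
  proof (rule cont_mix_time_from_le[OF T_nonneg])
    fix t
    assume "?A / 2 * (real (mix_time_inv_2e P' \<pi>) + 1) * ln (1 / (\<epsilon>\<^sup>2 * \<pi> x)) \<le> t"
    then show "tvd (cont_kernel P t x) \<pi> \<le> \<epsilon>"
      using T_nonneg \<open>0 \<le> ?A\<close> assms(7)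
      by (intro tvd_cont_kernel_le_of_poincare[OF st assms(2) pos poincare_of_flow[OF st assms(3-6)]])
        simp_all
  qed
qed

end
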